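(* For density operators $\rho_1,\rho_2$ on a finite-dimensional Hilbert space $\mathcal H_1$ and $\sigma_1,\sigma_2$ on a finite-dimensional Hilbert space $\mathcal H_2$, $$D(\rho_1\otimes\sigma_1,\rho_2\otimes\sigma_2)^2\ \ge\ 1-\bigl(1-D_{\mathrm{wc}}(\rho_1,\rho_2)^2\bigr)\bigl(1-D(\sigma_1,\sigma_2)^2\bigr).$$ In particular $D(\rho_1,\rho_2)\ge D_{\mathrm{wc}}(\rho_1,\rho_2)$.
   Context: $D(\rho,\sigma)=\tfrac12\operatorname{tr}|\rho-\sigma|$ is the trace distance. The worst-case distinguishability is $D_{\mathrm{wc}}(\rho_1,\rho_2)=\inf\{D(|\phi_1\rangle\langle\phi_1|,|\phi_2\rangle\langle\phi_2|)\mid |\phi_i\rangle\in\operatorname{supp}\rho_i,\ \|\phi_i\|=1\}$, where $\operatorname{supp}\rho$ is the orthogonal complement of the kernel of $\rho$; equivalently it is the minimum of $\sin\vartheta_k$ over the Jordan (principal) angles $\vartheta_k$ between $\operatorname{supp}\rho_1$ and $\operatorname{supp}\rho_2$. *)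

theory Defs
  imports "HOL-Analysis.Analysis"
begin

text \<open>Finite-dimensional Hilbert spaces are modelled as \<open>complex ^ 'n\<close> for a finite
  index type \<open>'n\<close>; operators are \<open>complex ^ 'n ^ 'n\<close> matrices (row index first).\<close>

type_synonym 'n cmat = "complex ^ 'n ^ 'n"

definition adjoint_mat :: "complex ^ 'm ^ 'n \<Rightarrow> complex ^ 'n ^ 'm" where
  "adjoint_mat A = (\<chi> i j. cnj (A $ j $ i))"

definition cinner :: "complex ^ 'n \<Rightarrow> complex ^ 'n \<Rightarrow> complex" where
  "cinner x y = (\<Sum>i\<in>UNIV. cnj (x $ i) * y $ i)"

definition hermitian :: "('n::finite) cmat \<Rightarrow> bool" where
  "hermitian A \<longleftrightarrow> adjoint_mat A = A"

definition psd :: "('n::finite) cmat \<Rightarrow> bool" where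
  "psd A \<longleftrightarrow> hermitian A \<and> (\<forall>x. 0 \<le> Re (cinner x (A *v x)))"

definition density_op :: "('n::finite) cmat \<Rightarrow> bool" where
  "density_op \<rho> \<longleftrightarrow> psd \<rho> \<and> trace \<rho> = 1"

definition mat_abs :: "('n::finite) cmat \<Rightarrow> 'n cmat" where
  "mat_abs A = (THE B. psd B \<and> B ** B = adjoint_mat A ** A)"

definition trace_dist :: "('n::finite) cmat \<Rightarrow> 'n cmat \<Rightarrow> real" where
  "trace_dist \<rho> \<sigma> = Re (trace (mat_abs (\<rho> - \<sigma>))) / 2"

definition kron :: "complex ^ 'a ^ 'a \<Rightarrow> complex ^ 'b ^ 'b \<Rightarrow> complex ^ ('a \<times> 'b) ^ ('a \<times> 'b)" where
  "kron A B = (\<chi> p q. A $ fst p $ fst q * B $ snd p $ snd q)"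

definition ket_bra :: "complex ^ 'n \<Rightarrow> complex ^ 'n ^ 'n" where
  "ket_bra \<phi> = (\<chi> i j. \<phi> $ i * cnj (\<phi> $ j))"

definition ker_op :: "('n::finite) cmat \<Rightarrow> (complex ^ 'n) set" where
  "ker_op A = {y. A *v y = 0}"

definition supp_op :: "('n::finite) cmat \<Rightarrow> (complex ^ 'n) set" where
  "supp_op A = {x. \<forall>y\<in>ker_op A. cinner y x = 0}"

definition wc_dist :: "('n::finite) cmat \<Rightarrow> 'n cmat \<Rightarrow> real" where
  "wc_dist \<rho>1 \<rho>2 = Inf {trace_dist (ket_bra \<phi>1) (ket_bra \<phi>2) | \<phi>1 \<phi>2.
      \<phi>1 \<in> supp_op \<rho>1 \<and> \<phi>2 \<in> supp_op \<rho>2 \<and> norm \<phi>1 = 1 \<and> norm \<phi>2 = 1}"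

end

theory Submission
  imports Defs
begin

text \<open>Let \<open>c = sqrt (1 - D\<^sub>w\<^sub>c(\<rho>1, \<rho>2)\<^sup>2)\<close>, the largest overlap \<open>|\<langle>u, v\<rangle>|\<close> of unit vectors
  from the two supports. The key step is a Helstrom bound for such states: for weights
  \<open>x, y \<ge> 0\<close> some projector \<open>P\<close> achieves
  \<open>x (2 tr P\<rho>1 - 1) - y (2 tr P\<rho>2 - 1) \<ge> sqrt ((x + y)\<^sup>2 - 4 c\<^sup>2 x y)\<close>, the optimal value for two pure
  states with overlap \<open>c\<close>. \<open>P\<close> is built from a Jordan basis: an orthonormal basis of the support
  of \<open>\<rho>1\<close> diagonalising the compression of the projector \<open>Q\<close> onto the support of \<open>\<rho>2\<close>. Each
  basis vector \<open>w\<close> spans with \<open>Q w\<close> a plane, the planes are mutually orthogonal, and in each of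
  them the problem is the two-dimensional one with squared overlap \<open>\<langle>w, Q w\<rangle> \<le> c\<^sup>2\<close>.

  As \<open>tr |X| \<ge> 2 tr PX - tr X\<close> for every projector \<open>P\<close>, the case \<open>x = y = 1\<close> gives
  \<open>D(\<rho>1, \<rho>2) \<ge> sqrt (1 - c\<^sup>2) = D\<^sub>w\<^sub>c(\<rho>1, \<rho>2)\<close>. For the tensor product, measure \<open>\<sigma>\<close> with the
  projector onto the positive part of \<open>\<sigma>1 - \<sigma>2\<close>, which splits the weights into \<open>(p\<^sub>1, q\<^sub>1)\<close> and
  \<open>(p\<^sub>2, q\<^sub>2)\<close> with \<open>p\<^sub>1 - q\<^sub>1 = D(\<sigma>1, \<sigma>2)\<close>, and measure \<open>\<rho>\<close> with the Helstrom projector for each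
  part. The Helstrom bound is a Euclidean norm, so by the triangle inequality the two parts add up
  to at least \<open>2 sqrt (1 - c\<^sup>2 + c\<^sup>2 D(\<sigma>1, \<sigma>2)\<^sup>2)\<close>.\<close>

lemma cinner_zero_left [simp]: "cinner 0 y = 0"
  by (simp add: cinner_def)

lemma cinner_zero_right [simp]: "cinner x 0 = 0"
  by (simp add: cinner_def)

lemma cinner_add_left: "cinner (x + y) z = cinner x z + cinner y z"
  by (simp add: cinner_def distrib_right sum.distrib)

lemma cinner_add_right: "cinner x (y + z) = cinner x y + cinner x z"
  by (simp add: cinner_def distrib_left sum.distrib)

lemma cinner_diff_left: "cinner (x - y) z = cinner x z - cinner y z"
  by (simp add: cinner_def left_diff_distrib sum_subtractf)

lemma cinner_diff_right: "cinner x (y - z) = cinner x y - cinner x z"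
  by (simp add: cinner_def right_diff_distrib sum_subtractf)

lemma cinner_minus_right: "cinner x (- y) = - cinner x y"
  by (simp add: cinner_def sum_negf)

lemma cinner_smult_left: "cinner (c *s x) y = cnj c * cinner x y"
  by (simp add: cinner_def sum_distrib_left mult_ac)

lemma cinner_smult_right: "cinner x (c *s y) = c * cinner x y"
  by (simp add: cinner_def sum_distrib_left mult_ac)

lemma cinner_sum_left: "cinner (sum f S) y = (\<Sum>s\<in>S. cinner (f s) y)"
  by (induct S rule: infinite_finite_induct) (auto simp: cinner_add_left)

lemma cinner_sum_right: "cinner x (sum f S) = (\<Sum>s\<in>S. cinner x (f s))"
  by (induct S rule: infinite_finite_induct) (auto simp: cinner_add_right)

lemma cnj_cinner: "cnj (cinner x y) = cinner y x"
  by (simp add: cinner_def mult.commute)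

lemma cinner_eq_0_commute: "cinner x y = 0 \<Longrightarrow> cinner y x = 0"
  by (metis cnj_cinner complex_cnj_zero)

lemma smult_of_real: "(of_real r :: complex) *s x = r *\<^sub>R x"
proof (subst vec_eq_iff, intro allI)
  fix i
  have "(r *\<^sub>R x) $ i = r *\<^sub>R (x $ i)"
    by (simp only: vector_scaleR_component)
  also have "\<dots> = (of_real r :: complex) * x $ i"
    by (simp add: scaleR_conv_of_real)
  finally show "((of_real r :: complex) *s x) $ i = (r *\<^sub>R x) $ i"
    by (simp only: vector_smult_component)
qed

lemma cinner_scaleR_left: "cinner (r *\<^sub>R x) y = of_real r * cinner x y"
  by (simp add: smult_of_real[symmetric] cinner_smult_left)

lemma cinner_scaleR_right: "cinner x (r *\<^sub>R y) = of_real r * cinner x y"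
  by (simp add: smult_of_real[symmetric] cinner_smult_right)

lemma matrix_vector_mult_scaleR: "A *v (r *\<^sub>R x) = r *\<^sub>R (A *v (x :: complex ^ 'n))"
  by (simp add: smult_of_real[symmetric] vec.scale)

lemma cinner_self: "cinner x x = of_real ((norm x)\<^sup>2)"
proof -
  have "(norm x)\<^sup>2 = (\<Sum>i\<in>UNIV. (cmod (x $ i))\<^sup>2)"
    by (simp add: norm_vec_def L2_set_def sum_nonneg)
  then have "of_real ((norm x)\<^sup>2) = (\<Sum>i\<in>UNIV. of_real ((cmod (x $ i))\<^sup>2) :: complex)"
    by simp
  also have "\<dots> = cinner x x"
    unfolding cinner_def by (rule sum.cong) (auto simp: mult.commute complex_norm_square[symmetric])
  finally show ?thesis by simp
qed

lemma cinner_self_eq_0 [simp]: "cinner x x = 0 \<longleftrightarrow> x = 0"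
  by (simp add: cinner_self)

lemma norm_sq_cinner: "(norm x)\<^sup>2 = Re (cinner x x)"
  by (simp add: cinner_self)

lemma norm_eq_1_iff_cinner: "norm u = 1 \<longleftrightarrow> cinner u u = 1"
proof -
  have "cinner u u = 1 \<longleftrightarrow> (norm u)\<^sup>2 = 1"
    unfolding cinner_self by (metis of_real_eq_1_iff)
  then show ?thesis
    using norm_ge_zero[of u] by (auto simp: power2_eq_1_iff)
qed

lemma cinner_adjoint: "cinner x (A *v y) = cinner (adjoint_mat A *v x) y"
proof -
  have "cinner x (A *v y) = (\<Sum>i\<in>UNIV. \<Sum>j\<in>UNIV. cnj (x $ i) * A $ i $ j * y $ j)"
    by (simp add: cinner_def matrix_vector_mult_def sum_distrib_left mult.assoc)
  also have "\<dots> = (\<Sum>j\<in>UNIV. \<Sum>i\<in>UNIV. cnj (x $ i) * A $ i $ j * y $ j)"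
    by (rule sum.swap)
  also have "\<dots> = cinner (adjoint_mat A *v x) y"
    unfolding cinner_def matrix_vector_mult_def adjoint_mat_def
    by (simp add: sum_distrib_right sum_distrib_left mult.commute mult.left_commute)
  finally show ?thesis .
qed

lemma hermitian_cinner: "hermitian A \<Longrightarrow> cinner x (A *v y) = cinner (A *v x) y"
  by (simp add: hermitian_def cinner_adjoint)

lemma hermitian_quadratic_real:
  assumes "hermitian A"
  shows "cinner x (A *v x) = of_real (Re (cinner x (A *v x)))"
proof -
  have "cnj (cinner x (A *v x)) = cinner x (A *v x)"
    using assms by (simp add: cnj_cinner hermitian_cinner)
  then have "Im (cinner x (A *v x)) = 0"
    by (metis cnj.sel(2) equal_neg_zero)
  then show ?thesis
    by (simp add: complex_eq_iff)
qed

lemma hermitian_diff: "hermitian A \<Longrightarrow> hermitian B \<Longrightarrow> hermitian (A - B)"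
  by (simp add: hermitian_def adjoint_mat_def vec_eq_iff)

lemma hermitian_zero: "hermitian (0 :: 'n::finite cmat)"
  by (simp add: hermitian_def adjoint_mat_def vec_eq_iff)

lemma psd_quadratic_nonneg: "psd A \<Longrightarrow> 0 \<le> Re (cinner x (A *v x))"
  by (simp add: psd_def)

lemma density_op_hermitian: "density_op \<rho> \<Longrightarrow> hermitian \<rho>"
  by (simp add: density_op_def psd_def)

lemma density_op_psd: "density_op \<rho> \<Longrightarrow> psd \<rho>"
  by (simp add: density_op_def)


definition orthonormal_fam :: "'i set \<Rightarrow> ('i \<Rightarrow> complex ^ 'n) \<Rightarrow> bool" where
  "orthonormal_fam I f \<longleftrightarrow> (\<forall>i\<in>I. \<forall>j\<in>I. cinner (f i) (f j) = (if i = j then 1 else 0))"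

definition onb_of :: "(complex ^ 'n) set \<Rightarrow> (complex ^ 'n) set \<Rightarrow> bool" where
  "onb_of W V \<longleftrightarrow> finite W \<and> W \<subseteq> V \<and> orthonormal_fam W id \<and>
     (\<forall>z\<in>V. z = (\<Sum>w\<in>W. cinner w z *s w))"

lemma onb_of_cinner: "onb_of W V \<Longrightarrow> u \<in> W \<Longrightarrow> w \<in> W \<Longrightarrow> cinner u w = (if u = w then 1 else 0)"
  by (simp add: onb_of_def orthonormal_fam_def)

lemma bessel_inequality:
  assumes fin: "finite I" and orth: "orthonormal_fam I f"
  shows "(\<Sum>i\<in>I. (cmod (cinner (f i) z))\<^sup>2) \<le> Re (cinner z z)"
proof -
  define p where "p = (\<Sum>i\<in>I. cinner (f i) z *s f i)"
  define S where "S = (\<Sum>i\<in>I. of_real ((cmod (cinner (f i) z))\<^sup>2) :: complex)"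
  have pf: "cinner p (f j) = cnj (cinner (f j) z)" if "j \<in> I" for j
  proof -
    have "cinner p (f j) = (\<Sum>i\<in>I. cnj (cinner (f i) z) * (if i = j then 1 else 0))"
      using orth that by (auto simp: p_def cinner_sum_left cinner_smult_left orthonormal_fam_def
          intro!: sum.cong)
    then show ?thesis
      using fin that by (simp add: if_distrib sum.delta' cong: if_cong)
  qed
  have "cinner p p = (\<Sum>j\<in>I. cinner (f j) z * cinner p (f j))"
    using cinner_sum_right[of p "\<lambda>i. cinner (f i) z *s f i" I]
    by (simp add: p_def[symmetric] cinner_smult_right)
  also have "\<dots> = (\<Sum>j\<in>I. cinner (f j) z * cnj (cinner (f j) z))"
    by (rule sum.cong) (auto simp: pf)
  finally have pp: "cinner p p = S"
    by (simp add: S_def complex_norm_square del: of_real_power)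
  have zf: "cinner z (f i) = cnj (cinner (f i) z)" for i
    by (simp add: cnj_cinner)
  have zp: "cinner z p = S"
    by (simp add: p_def S_def cinner_sum_right cinner_smult_right zf complex_norm_square
        del: of_real_power)
  have pz: "cinner p z = S"
    by (simp add: p_def S_def cinner_sum_left cinner_smult_left complex_norm_square mult.commute
        del: of_real_power)
  have "0 \<le> Re (cinner (z - p) (z - p))"
    by (simp add: cinner_self)
  also have "\<dots> = Re (cinner z z) - Re S"
    by (simp add: cinner_diff_left cinner_diff_right pp zp pz)
  finally show ?thesis
    by (simp add: S_def)
qed

lemma cmod_cinner_le_1:
  assumes "cinner a a = 1" "cinner b b = 1"
  shows "cmod (cinner a b) \<le> 1"
proof -
  have "orthonormal_fam {a} id"
    using assms by (simp add: orthonormal_fam_def)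
  from bessel_inequality[OF _ this, of b] have "(cmod (cinner a b))\<^sup>2 \<le> 1"
    using assms by simp
  then show ?thesis
    using power2_le_imp_le[of "cmod (cinner a b)" 1] by simp
qed

lemma parseval:
  assumes "onb_of U UNIV"
  shows "(\<Sum>u\<in>U. cinner x u * cinner u y) = cinner x y"
proof -
  have "y = (\<Sum>u\<in>U. cinner u y *s u)"
    using assms by (simp add: onb_of_def)
  then have "cinner x y = cinner x (\<Sum>u\<in>U. cinner u y *s u)"
    by simp
  then show ?thesis
    by (simp add: cinner_sum_right cinner_smult_right mult.commute)
qed

lemma onb_of_orthogonal:
  assumes "onb_of W V" "\<forall>w\<in>W. cinner w z = 0" "s \<in> V"
  shows "cinner s z = 0"
proof -
  have "s = (\<Sum>w\<in>W. cinner w s *s w)"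
    using assms by (simp add: onb_of_def)
  then have "cinner s z = (\<Sum>w\<in>W. cnj (cinner w s) * cinner w z)"
    by (metis (no_types, lifting) cinner_smult_left cinner_sum_left sum.cong)
  then show ?thesis
    using assms(2) by simp
qed

lemma cinner_onb_residual:
  assumes W: "onb_of W V" and "w' \<in> W"
  shows "cinner w' (z - (\<Sum>w\<in>W. cinner w z *s w)) = 0"
proof -
  have "cinner w' (\<Sum>w\<in>W. cinner w z *s w) = (\<Sum>w\<in>W. cinner w z * (if w' = w then 1 else 0))"
    unfolding cinner_sum_right cinner_smult_right
    by (rule sum.cong) (use assms in \<open>auto simp: onb_of_cinner\<close>)
  also have "\<dots> = cinner w' z"
  proof -
    have "finite W"
      using W by (simp add: onb_of_def)
    then show ?thesis
      using \<open>w' \<in> W\<close> by (simp add: if_distrib sum.delta cong: if_cong)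
  qed
  finally show ?thesis
    by (simp add: cinner_diff_right)
qed

lemma trace_onb:
  assumes U: "onb_of U UNIV"
  shows "trace A = (\<Sum>u\<in>U. cinner u (A *v u))"
proof -
  have axis_left: "cinner (axis i 1) z = z $ i" for i z
  proof -
    have "cinner (axis i 1) z = (\<Sum>j\<in>UNIV. if j = i then z $ j else 0)"
      unfolding cinner_def by (rule sum.cong) (auto simp: axis_def)
    then show ?thesis
      by simp
  qed
  have axis_right: "cinner z (axis i 1) = cnj (z $ i)" for i z
    by (metis axis_left cnj_cinner)
  have "(\<Sum>u\<in>U. cinner u (A *v u)) =
      (\<Sum>u\<in>U. \<Sum>i\<in>UNIV. cinner (adjoint_mat A *v axis i 1) u * cinner u (axis i 1))"
  proof (rule sum.cong)
    fix u
    show "cinner u (A *v u) =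
        (\<Sum>i\<in>UNIV. cinner (adjoint_mat A *v axis i 1) u * cinner u (axis i 1))"
      unfolding axis_right cinner_adjoint[symmetric] axis_left
      by (simp add: cinner_def mult.commute)
  qed simp
  also have "\<dots> = (\<Sum>i\<in>UNIV. \<Sum>u\<in>U. cinner (adjoint_mat A *v axis i 1) u * cinner u (axis i 1))"
    by (rule sum.swap)
  also have "\<dots> = (\<Sum>i\<in>UNIV. cinner (adjoint_mat A *v axis i 1) (axis i 1))"
    using parseval[OF U] by simp
  also have "\<dots> = trace A"
    unfolding cinner_adjoint[symmetric] axis_right trace_def
    by (simp add: matrix_vector_mult_def axis_def if_distrib sum.delta' adjoint_mat_def
        cong: if_cong)
  finally show ?thesis
    by simp
qed

lemma Re_trace_onb: "onb_of U UNIV \<Longrightarrow> Re (trace A) = (\<Sum>u\<in>U. Re (cinner u (A *v u)))"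
  using trace_onb[of U A] by (simp add: Re_sum)


section \<open>The spectral theorem\<close>

lemma vec_subspace_imp_subspace:
  fixes V :: "(complex ^ 'n) set"
  assumes "vec.subspace V"
  shows "subspace V"
proof -
  have "r *\<^sub>R x \<in> V" if "x \<in> V" for r x
  proof -
    have "(of_real r :: complex) *s x \<in> V"
      using assms that by (rule vec.subspace_scale)
    then show ?thesis
      by (simp add: smult_of_real)
  qed
  then show ?thesis
    using assms by (simp add: subspace_def vec.subspace_def)
qed

lemma linear_le_quadratic_imp_zero:
  fixes R K :: real
  assumes "\<forall>t. 2 * t * R \<le> t\<^sup>2 * K"
  shows "R = 0"
proof (rule ccontr)
  assume "R \<noteq> 0"
  define a where "a = \<bar>K\<bar> + 1"
  have a: "a > 0" "K \<le> a - 1"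
    by (auto simp: a_def)
  define t where "t = R / a"
  have "2 * t * R \<le> t\<^sup>2 * K"
    using assms by blast
  also have "\<dots> \<le> t\<^sup>2 * (a - 1)"
    using a by (simp add: mult_left_mono)
  also have "\<dots> = R\<^sup>2 * (a - 1) / a\<^sup>2"
    by (simp add: t_def power_divide)
  also have "\<dots> < R\<^sup>2 * a * 2 / a\<^sup>2"
    using a \<open>R \<noteq> 0\<close> by (intro divide_strict_right_mono) auto
  also have "\<dots> = 2 * t * R"
    using a by (simp add: t_def power2_eq_square)
  finally show False
    by simp
qed

lemma rayleigh_max_exists:
  assumes V: "vec.subspace V" and x: "x \<in> V" "x \<noteq> 0"
  obtains v where "v \<in> V" "norm v = 1"
    "\<And>z. z \<in> V \<Longrightarrow> Re (cinner z (H *v z)) \<le> Re (cinner v (H *v v)) * (norm z)\<^sup>2"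
proof -
  define f where "f z = Re (cinner z (H *v z))" for z
  define S where "S = V \<inter> sphere 0 1"
  have sub: "subspace V"
    using V by (rule vec_subspace_imp_subspace)
  have "compact S"
    unfolding S_def using closed_subspace[OF sub] compact_sphere
    by (metis compact_Int_closed inf_commute)
  moreover have "(1 / norm x) *\<^sub>R x \<in> S"
    using x sub by (simp add: S_def subspace_scale)
  moreover have "continuous_on S f"
    unfolding f_def cinner_def matrix_vector_mult_def by (intro continuous_intros)
  ultimately obtain v where v: "v \<in> S" "\<forall>y\<in>S. f y \<le> f v"
    using continuous_attains_sup[of S f] by blast
  have "f z \<le> f v * (norm z)\<^sup>2" if "z \<in> V" for z
  proof (cases "z = 0")
    case False
    have "(1 / norm z) *\<^sub>R z \<in> S"
      using that False sub by (simp add: S_def subspace_scale)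
    then have "f ((1 / norm z) *\<^sub>R z) \<le> f v"
      using v by blast
    then show ?thesis
      using False by (simp add: f_def cinner_scaleR_left cinner_scaleR_right
          matrix_vector_mult_scaleR field_simps power2_eq_square)
  qed (simp add: f_def)
  then show thesis
    using that v by (auto simp: S_def f_def)
qed

lemma rayleigh_max_orthogonal:
  assumes H: "hermitian H" and V: "vec.subspace V" and v: "v \<in> V" "norm v = 1"
    and max: "\<And>z. z \<in> V \<Longrightarrow> Re (cinner z (H *v z)) \<le> Re (cinner v (H *v v)) * (norm z)\<^sup>2"
    and w: "w \<in> V" "cinner v w = 0"
  shows "cinner w (H *v v) = 0"
proof -
  have vv: "cinner v v = 1"
    using v by (simp add: norm_eq_1_iff_cinner)
  have Re_zero: "Re (cinner u (H *v v)) = 0" if u: "u \<in> V" "cinner v u = 0" for u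
  proof (rule linear_le_quadratic_imp_zero, intro allI)
    fix t :: real
    let ?f = "\<lambda>z. Re (cinner z (H *v z))"
    have "v + t *\<^sub>R u \<in> V"
      using u v vec_subspace_imp_subspace[OF V] by (simp add: subspace_add subspace_scale)
    then have "?f (v + t *\<^sub>R u) \<le> ?f v * (norm (v + t *\<^sub>R u))\<^sup>2"
      by (rule max)
    moreover have uv: "cinner u v = 0"
      using u cinner_eq_0_commute by blast
    then have "(norm (v + t *\<^sub>R u))\<^sup>2 = 1 + t\<^sup>2 * (norm u)\<^sup>2"
      unfolding norm_sq_cinner using u vv
      by (simp add: cinner_add_left cinner_add_right cinner_scaleR_left cinner_scaleR_right
          power2_eq_square)
    moreover have "cinner v (H *v u) = cnj (cinner u (H *v v))"
      using H by (simp add: hermitian_cinner cnj_cinner)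
    then have "?f (v + t *\<^sub>R u) = ?f v + 2 * t * Re (cinner u (H *v v)) + t\<^sup>2 * ?f u"
      using u uv vv
      by (simp add: cinner_add_left cinner_add_right cinner_scaleR_left cinner_scaleR_right
          matrix_vector_right_distrib matrix_vector_mult_scaleR power2_eq_square algebra_simps)
    ultimately show "2 * t * Re (cinner u (H *v v)) \<le> t\<^sup>2 * (?f v * (norm u)\<^sup>2 - ?f u)"
      by (simp add: algebra_simps)
  qed
  have "Re (cinner w (H *v v)) = 0"
    using Re_zero w by blast
  moreover have "Re (cinner (\<i> *s w) (H *v v)) = 0"
    using w V by (intro Re_zero) (auto simp: vec.subspace_def cinner_smult_right)
  then have "Im (cinner w (H *v v)) = 0"
    by (simp add: cinner_smult_left)
  ultimately show ?thesis
    by (simp add: complex_eq_iff)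
qed

lemma onb_of_insert:
  assumes V: "vec.subspace V" and v: "v \<in> V" "cinner v v = 1"
    and W: "onb_of W {z \<in> V. cinner v z = 0}"
  shows "onb_of (insert v W) V"
  unfolding onb_of_def
proof (intro conjI ballI)
  have W_sub: "W \<subseteq> V" and fin: "finite W" and orth: "orthonormal_fam W id"
    and span: "\<And>z. z \<in> V \<Longrightarrow> cinner v z = 0 \<Longrightarrow> z = (\<Sum>w\<in>W. cinner w z *s w)"
    and vw: "\<And>w. w \<in> W \<Longrightarrow> cinner v w = 0"
    using W by (auto simp: onb_of_def)
  have wv: "cinner w v = 0" if "w \<in> W" for w
    using vw[OF that] by (rule cinner_eq_0_commute)
  have "v \<notin> W"
    using vw v by fastforce
  show "finite (insert v W)" "insert v W \<subseteq> V"
    using fin W_sub v by auto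
  show "orthonormal_fam (insert v W) id"
    using orth v vw wv \<open>v \<notin> W\<close> unfolding orthonormal_fam_def by auto
  fix z assume z: "z \<in> V"
  define z' where "z' = z - cinner v z *s v"
  have "z' \<in> V" "cinner v z' = 0"
    using z v V by (auto simp: z'_def vec.subspace_diff vec.subspace_scale cinner_diff_right
        cinner_smult_right)
  then have "z' = (\<Sum>w\<in>W. cinner w z' *s w)"
    by (rule span)
  also have "\<dots> = (\<Sum>w\<in>W. cinner w z *s w)"
    by (rule sum.cong) (auto simp: z'_def cinner_diff_right cinner_smult_right wv)
  finally have "z = cinner v z *s v + (\<Sum>w\<in>W. cinner w z *s w)"
    by (simp add: z'_def algebra_simps)
  then show "z = (\<Sum>w\<in>insert v W. cinner w z *s w)"
    using fin \<open>v \<notin> W\<close> by simp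
qed

lemma orthogonal_complement_in_subspace:
  assumes V: "vec.subspace V" and v: "v \<in> V" "cinner v v = 1"
  shows "vec.subspace {z \<in> V. cinner v z = 0}" "vec.dim {z \<in> V. cinner v z = 0} < vec.dim V"
proof -
  let ?V' = "{z \<in> V. cinner v z = 0}"
  show V': "vec.subspace ?V'"
    using V by (auto simp: vec.subspace_def cinner_add_right cinner_smult_right)
  have "v \<notin> ?V'"
    using v by simp
  then have "?V' \<subset> V"
    using v by blast
  then have "vec.span ?V' \<subset> vec.span V"
    using V' V by (simp add: vec.span_eq_iff[THEN iffD2])
  then show "vec.dim ?V' < vec.dim V"
    by (rule vec.dim_psubset)
qed

theorem hermitian_compression_diagonalizable:
  assumes H: "hermitian H"
  shows "vec.subspace V \<Longrightarrow> \<exists>W. onb_of W V \<and> (\<forall>w\<in>W. \<forall>w'\<in>W. w \<noteq> w' \<longrightarrow> cinner w (H *v w') = 0)"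
proof (induct "vec.dim V" arbitrary: V rule: less_induct)
  case less
  show ?case
  proof (cases "V \<subseteq> {0}")
    case True
    then have "onb_of {} V"
      by (auto simp: onb_of_def orthonormal_fam_def)
    then show ?thesis
      by blast
  next
    case False
    then obtain x where x: "x \<in> V" "x \<noteq> 0"
      by auto
    obtain v where v: "v \<in> V" "norm v = 1"
      and max: "\<And>z. z \<in> V \<Longrightarrow> Re (cinner z (H *v z)) \<le> Re (cinner v (H *v v)) * (norm z)\<^sup>2"
      using rayleigh_max_exists[OF less.prems x, of H] by blast
    have vv: "cinner v v = 1"
      using v by (simp add: norm_eq_1_iff_cinner)
    obtain W where W: "onb_of W {z \<in> V. cinner v z = 0}"
      and diag: "\<forall>w\<in>W. \<forall>w'\<in>W. w \<noteq> w' \<longrightarrow> cinner w (H *v w') = 0"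
      using less.hyps orthogonal_complement_in_subspace[OF less.prems v(1) vv] by blast
    have orth: "cinner w (H *v v) = 0" "cinner v (H *v w) = 0" if "w \<in> W" for w
    proof -
      have "w \<in> V" "cinner v w = 0"
        using W that by (auto simp: onb_of_def dest: subsetD)
      then show "cinner w (H *v v) = 0"
        using rayleigh_max_orthogonal[OF H less.prems v max] by blast
      then have "cinner (H *v v) w = 0"
        by (rule cinner_eq_0_commute)
      then show "cinner v (H *v w) = 0"
        using H by (simp add: hermitian_cinner)
    qed
    have "onb_of (insert v W) V"
      by (rule onb_of_insert[OF less.prems v(1) vv W])
    moreover have "\<forall>w\<in>insert v W. \<forall>w'\<in>insert v W. w \<noteq> w' \<longrightarrow> cinner w (H *v w') = 0"
      using diag orth by auto
    ultimately show ?thesis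
      by blast
  qed
qed

definition eigenbasis :: "'n::finite cmat \<Rightarrow> (complex ^ 'n) set \<Rightarrow> bool" where
  "eigenbasis H U \<longleftrightarrow> onb_of U UNIV \<and> (\<forall>u\<in>U. H *v u = cinner u (H *v u) *s u)"

lemma hermitian_eigenbasis_exists:
  assumes "hermitian H"
  obtains U where "eigenbasis H U"
proof -
  obtain U where U: "onb_of U UNIV"
    and diag: "\<forall>w\<in>U. \<forall>w'\<in>U. w \<noteq> w' \<longrightarrow> cinner w (H *v w') = 0"
    using hermitian_compression_diagonalizable[OF assms] vec.subspace_UNIV by blast
  have "H *v u = cinner u (H *v u) *s u" if "u \<in> U" for u
  proof -
    have "H *v u = (\<Sum>w\<in>U. cinner w (H *v u) *s w)"
      using U by (simp add: onb_of_def)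
    also have "\<dots> = (\<Sum>w\<in>U. if w = u then cinner u (H *v u) *s u else 0)"
      by (rule sum.cong) (use diag that in auto)
    also have "\<dots> = cinner u (H *v u) *s u"
      using U that by (simp add: onb_of_def)
    finally show ?thesis .
  qed
  then show thesis
    using U by (auto simp: eigenbasis_def intro!: that)
qed

lemma eigenbasis_apply:
  assumes "hermitian H" "eigenbasis H U" "u \<in> U"
  shows "H *v u = of_real (Re (cinner u (H *v u))) *s u"
  using assms hermitian_quadratic_real by (metis eigenbasis_def)


section \<open>Spectral sums and the absolute value\<close>

definition spectral_sum :: "(complex ^ 'n) set \<Rightarrow> (complex ^ 'n \<Rightarrow> real) \<Rightarrow> complex ^ 'n ^ 'n" where
  "spectral_sum U g = (\<chi> i j. \<Sum>u\<in>U. of_real (g u) * u $ i * cnj (u $ j))"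

lemma spectral_sum_apply: "spectral_sum U g *v z = (\<Sum>u\<in>U. (of_real (g u) * cinner u z) *s u)"
  unfolding spectral_sum_def matrix_vector_mult_def cinner_def
  apply (simp add: vec_eq_iff sum_component sum_distrib_left sum_distrib_right mult_ac)
  apply (subst sum.swap)
  apply (simp add: mult_ac)
  done

lemma hermitian_spectral_sum: "hermitian (spectral_sum U g)"
  by (simp add: hermitian_def adjoint_mat_def spectral_sum_def vec_eq_iff mult_ac)

lemma cinner_spectral_sum_onb:
  assumes U: "onb_of U UNIV" and u: "u \<in> U"
  shows "cinner u (spectral_sum U g *v z) = of_real (g u) * cinner u z"
proof -
  have "cinner u (spectral_sum U g *v z) =
      (\<Sum>w\<in>U. (of_real (g w) * cinner w z) * (if u = w then 1 else 0))"
    unfolding spectral_sum_apply cinner_sum_right cinner_smult_right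
    by (rule sum.cong) (use assms in \<open>auto simp: onb_of_cinner\<close>)
  also have "\<dots> = of_real (g u) * cinner u z"
    using U u by (simp add: onb_of_def if_distrib sum.delta cong: if_cong)
  finally show ?thesis .
qed

lemma spectral_sum_mult:
  assumes U: "onb_of U UNIV"
  shows "spectral_sum U g ** spectral_sum U h = spectral_sum U (\<lambda>u. g u * h u)"
proof (subst matrix_eq, intro allI)
  fix z
  have "(spectral_sum U g ** spectral_sum U h) *v z = spectral_sum U g *v (spectral_sum U h *v z)"
    by (simp add: matrix_vector_mul_assoc)
  also have "\<dots> = (\<Sum>u\<in>U. (of_real (g u) * (of_real (h u) * cinner u z)) *s u)"
    unfolding spectral_sum_apply[of U g]
    by (rule sum.cong) (use U in \<open>auto simp: cinner_spectral_sum_onb\<close>)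
  also have "\<dots> = spectral_sum U (\<lambda>u. g u * h u) *v z"
    by (simp add: spectral_sum_apply mult.assoc)
  finally show "(spectral_sum U g ** spectral_sum U h) *v z = spectral_sum U (\<lambda>u. g u * h u) *v z" .
qed

lemma trace_spectral_sum:
  assumes U: "onb_of U UNIV"
  shows "trace (spectral_sum U g) = of_real (\<Sum>u\<in>U. g u)"
  using U by (simp add: trace_onb[OF U] cinner_spectral_sum_onb onb_of_cinner)

lemma spectral_sum_quadratic:
  "cinner z (spectral_sum U g *v z) = (\<Sum>u\<in>U. of_real (g u * (cmod (cinner u z))\<^sup>2))"
  unfolding spectral_sum_apply cinner_sum_right cinner_smult_right
proof (rule sum.cong)
  fix u
  have "cinner z u = cnj (cinner u z)"
    by (simp add: cnj_cinner)
  then show "of_real (g u) * cinner u z * cinner z u = of_real (g u * (cmod (cinner u z))\<^sup>2)"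
    by (simp add: complex_norm_square mult.assoc del: of_real_power)
qed simp

lemma psd_spectral_sum: "(\<And>u. u \<in> U \<Longrightarrow> 0 \<le> g u) \<Longrightarrow> psd (spectral_sum U g)"
  by (simp add: psd_def hermitian_spectral_sum spectral_sum_quadratic Re_sum sum_nonneg)

lemma eigenbasis_spectral_sum:
  assumes H: "hermitian H" and U: "eigenbasis H U"
  shows "H = spectral_sum U (\<lambda>u. Re (cinner u (H *v u)))"
proof (subst matrix_eq, intro allI)
  fix z
  have "z = (\<Sum>u\<in>U. cinner u z *s u)"
    using U by (simp add: eigenbasis_def onb_of_def)
  then have "H *v z = (\<Sum>u\<in>U. cinner u z *s (H *v u))"
    by (metis (no_types, lifting) vec.scale vec.sum sum.cong)
  also have "\<dots> = spectral_sum U (\<lambda>u. Re (cinner u (H *v u))) *v z"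
    unfolding spectral_sum_apply
  proof (rule sum.cong)
    fix u assume "u \<in> U"
    then show "cinner u z *s (H *v u) = (of_real (Re (cinner u (H *v u))) * cinner u z) *s u"
      by (subst eigenbasis_apply[OF H U]) (simp_all add: mult.commute)
  qed simp
  finally show "H *v z = spectral_sum U (\<lambda>u. Re (cinner u (H *v u))) *v z" .
qed

lemma quadratic_eigenbasis:
  assumes "hermitian H" "eigenbasis H U"
  shows "Re (cinner z (H *v z)) = (\<Sum>u\<in>U. Re (cinner u (H *v u)) * (cmod (cinner z u))\<^sup>2)"
proof -
  have "Re (cinner z (H *v z)) = (\<Sum>u\<in>U. Re (cinner u (H *v u)) * (cmod (cinner u z))\<^sup>2)"
    by (subst eigenbasis_spectral_sum[OF assms]) (simp add: spectral_sum_quadratic Re_sum)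
  moreover have "cmod (cinner u z) = cmod (cinner z u)" for u
    by (metis cnj_cinner complex_mod_cnj)
  ultimately show ?thesis
    by simp
qed

text \<open>\<open>y = C u - b u\<close> satisfies \<open>C y = - b y\<close>, which positivity of \<open>C\<close> only allows if \<open>b = 0\<close>
  or \<open>y = 0\<close>.\<close>

lemma psd_sqrt_eigenvector:
  assumes C: "psd C" and b: "0 \<le> b" and CCu: "C *v (C *v u) = of_real (b * b) *s u"
  shows "C *v u = of_real b *s u"
proof -
  define y where "y = C *v u - of_real b *s u"
  have Cy: "C *v y = - (of_real b *s y)"
    by (simp add: y_def matrix_vector_mult_diff_distrib vec.scale CCu vec_eq_iff algebra_simps)
  have "0 \<le> Re (cinner y (C *v y))"
    using C by (rule psd_quadratic_nonneg)
  also have "\<dots> = - b * Re (cinner y y)"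
    by (simp add: Cy cinner_minus_right cinner_smult_right)
  finally have "b * Re (cinner y y) \<le> 0"
    by simp
  moreover have "0 \<le> Re (cinner y y)"
    by (simp add: cinner_self)
  ultimately have "b = 0 \<or> Re (cinner y y) = 0"
    using b by (metis antisym mult_nonneg_nonneg mult_eq_0_iff)
  then have "b = 0 \<or> y = 0"
    by (auto simp: cinner_self)
  then show ?thesis
  proof
    assume "b = 0"
    then have "cinner (C *v u) (C *v u) = 0"
      using C by (simp add: psd_def hermitian_cinner[symmetric] CCu)
    then show ?thesis
      by (simp add: \<open>b = 0\<close>)
  qed (simp add: y_def)
qed

lemma psd_sqrt_unique:
  assumes B: "psd B" and C: "psd C" and eq: "B ** B = C ** C"
  shows "B = C"
proof -
  have HB: "hermitian B"
    using B by (simp add: psd_def)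
  obtain U where U: "eigenbasis B U"
    using hermitian_eigenbasis_exists[OF HB] by blast
  have CB: "C *v u = B *v u" if u: "u \<in> U" for u
  proof -
    define b where "b = Re (cinner u (B *v u))"
    have Bu: "B *v u = of_real b *s u"
      using eigenbasis_apply[OF HB U u] by (simp add: b_def)
    have "C *v (C *v u) = B *v (B *v u)"
      using eq by (simp add: matrix_vector_mul_assoc)
    then have "C *v (C *v u) = of_real (b * b) *s u"
      by (simp add: Bu vec.scale vector_smult_assoc)
    moreover have "0 \<le> b"
      using B by (simp add: b_def psd_quadratic_nonneg)
    ultimately show ?thesis
      using psd_sqrt_eigenvector[OF C] by (simp add: Bu)
  qed
  show ?thesis
  proof (subst matrix_eq, intro allI)
    fix z
    have "z = (\<Sum>u\<in>U. cinner u z *s u)"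
      using U by (simp add: eigenbasis_def onb_of_def)
    moreover have "B *v (\<Sum>u\<in>U. cinner u z *s u) = C *v (\<Sum>u\<in>U. cinner u z *s u)"
      unfolding vec.sum vec.scale by (rule sum.cong) (auto simp: CB)
    ultimately show "B *v z = C *v z"
      by simp
  qed
qed

lemma mat_abs_eigenbasis:
  assumes X: "hermitian X" and U: "eigenbasis X U"
  shows "mat_abs X = spectral_sum U (\<lambda>u. \<bar>Re (cinner u (X *v u))\<bar>)"
proof -
  define l where "l = (\<lambda>u. Re (cinner u (X *v u)))"
  define B where "B = spectral_sum U (\<lambda>u. \<bar>l u\<bar>)"
  have onb: "onb_of U UNIV"
    using U by (simp add: eigenbasis_def)
  have "X = spectral_sum U l"
    unfolding l_def by (rule eigenbasis_spectral_sum[OF X U])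
  then have "adjoint_mat X ** X = spectral_sum U l ** spectral_sum U l"
    using X by (simp add: hermitian_def)
  also have "\<dots> = B ** B"
    by (simp add: B_def spectral_sum_mult[OF onb] abs_mult_self_eq)
  finally have XX: "adjoint_mat X ** X = B ** B" .
  have "psd B"
    unfolding B_def by (rule psd_spectral_sum) simp
  then have "mat_abs X = B"
    unfolding mat_abs_def using XX psd_sqrt_unique by (intro the_equality) auto
  then show ?thesis
    by (simp add: B_def l_def)
qed

lemma trace_mat_abs_eigenbasis:
  assumes "hermitian X" "eigenbasis X U"
  shows "Re (trace (mat_abs X)) = (\<Sum>u\<in>U. \<bar>Re (cinner u (X *v u))\<bar>)"
  using assms by (simp add: mat_abs_eigenbasis trace_spectral_sum eigenbasis_def)


section \<open>Variational bounds for the trace norm\<close>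

text \<open>For an orthonormal family \<open>f\<close> this is \<open>Re (tr (P A))\<close>, where \<open>P\<close> projects onto the span of \<open>f\<close>.\<close>

definition proj_trace :: "'n::finite cmat \<Rightarrow> 'i set \<Rightarrow> ('i \<Rightarrow> complex ^ 'n) \<Rightarrow> real" where
  "proj_trace A I f = (\<Sum>i\<in>I. Re (cinner (f i) (A *v f i)))"

lemma proj_trace_diff: "proj_trace (A - B) I f = proj_trace A I f - proj_trace B I f"
  by (simp add: proj_trace_def matrix_vector_mult_diff_rdistrib cinner_diff_right sum_subtractf)

lemma proj_trace_onb: "onb_of U UNIV \<Longrightarrow> proj_trace A U id = Re (trace A)"
  by (simp add: proj_trace_def Re_trace_onb)

lemma proj_trace_eigenbasis:
  assumes "hermitian X" "eigenbasis X U"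
  shows "proj_trace X I f = (\<Sum>u\<in>U. Re (cinner u (X *v u)) * (\<Sum>i\<in>I. (cmod (cinner (f i) u))\<^sup>2))"
proof -
  have "proj_trace X I f = (\<Sum>i\<in>I. \<Sum>u\<in>U. Re (cinner u (X *v u)) * (cmod (cinner (f i) u))\<^sup>2)"
    unfolding proj_trace_def by (rule sum.cong[OF refl], rule quadratic_eigenbasis[OF assms])
  also have "\<dots> = (\<Sum>u\<in>U. \<Sum>i\<in>I. Re (cinner u (X *v u)) * (cmod (cinner (f i) u))\<^sup>2)"
    by (rule sum.swap)
  finally show ?thesis
    by (simp add: sum_distrib_left)
qed

lemma orthonormal_fam_weight_le_1:
  assumes "finite I" "orthonormal_fam I f" "onb_of U V" "u \<in> U"
  shows "(\<Sum>i\<in>I. (cmod (cinner (f i) u))\<^sup>2) \<le> 1"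
  using bessel_inequality[OF assms(1,2), of u] onb_of_cinner[OF assms(3,4,4)] by simp

text \<open>Choosing \<open>f\<close> to be the positive eigenvectors of \<open>X\<close> gives equality, so this is the
  variational characterisation of the trace norm.\<close>

theorem trace_mat_abs_ge:
  assumes X: "hermitian X" and fin: "finite I" and orth: "orthonormal_fam I f"
  shows "2 * proj_trace X I f - Re (trace X) \<le> Re (trace (mat_abs X))"
proof -
  obtain U where U: "eigenbasis X U"
    using hermitian_eigenbasis_exists[OF X] by blast
  then have onb: "onb_of U UNIV"
    by (simp add: eigenbasis_def)
  define l where "l u = Re (cinner u (X *v u))" for u
  define p where "p u = (\<Sum>i\<in>I. (cmod (cinner (f i) u))\<^sup>2)" for u
  have "2 * proj_trace X I f - Re (trace X) = (\<Sum>u\<in>U. l u * (2 * p u - 1))"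
    by (simp add: proj_trace_eigenbasis[OF X U] Re_trace_onb[OF onb] l_def p_def
        sum_distrib_left algebra_simps sum_subtractf)
  also have "\<dots> \<le> (\<Sum>u\<in>U. \<bar>l u\<bar>)"
  proof (rule sum_mono)
    fix u assume "u \<in> U"
    then have "0 \<le> p u" "p u \<le> 1"
      using orthonormal_fam_weight_le_1[OF fin orth onb] by (auto simp: p_def sum_nonneg)
    then have "\<bar>l u * (2 * p u - 1)\<bar> \<le> \<bar>l u\<bar>"
      by (simp add: abs_mult mult_left_le)
    then show "l u * (2 * p u - 1) \<le> \<bar>l u\<bar>"
      by simp
  qed
  also have "\<dots> = Re (trace (mat_abs X))"
    by (simp add: trace_mat_abs_eigenbasis[OF X U] l_def)
  finally show ?thesis .
qed

lemma proj_trace_le_trace: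
  assumes A: "psd A" and fin: "finite I" and orth: "orthonormal_fam I f"
  shows "proj_trace A I f \<le> Re (trace A)"
proof -
  have H: "hermitian A"
    using A by (simp add: psd_def)
  obtain U where U: "eigenbasis A U"
    using hermitian_eigenbasis_exists[OF H] by blast
  then have onb: "onb_of U UNIV"
    by (simp add: eigenbasis_def)
  have "proj_trace A I f = (\<Sum>u\<in>U. Re (cinner u (A *v u)) * (\<Sum>i\<in>I. (cmod (cinner (f i) u))\<^sup>2))"
    by (rule proj_trace_eigenbasis[OF H U])
  also have "\<dots> \<le> (\<Sum>u\<in>U. Re (cinner u (A *v u)))"
    using orthonormal_fam_weight_le_1[OF fin orth onb] psd_quadratic_nonneg[OF A]
    by (intro sum_mono) (simp add: mult_left_le)
  also have "\<dots> = Re (trace A)"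
    by (simp add: Re_trace_onb[OF onb])
  finally show ?thesis .
qed

lemma trace_mat_abs_nonneg:
  assumes "hermitian X"
  shows "0 \<le> Re (trace (mat_abs X))"
proof -
  obtain U where "eigenbasis X U"
    using hermitian_eigenbasis_exists[OF assms] by blast
  then show ?thesis
    by (simp add: trace_mat_abs_eigenbasis[OF assms] sum_nonneg)
qed


lemma vec_subspace_supp_op: "vec.subspace (supp_op A)"
  by (auto simp: vec.subspace_def supp_op_def cinner_add_right cinner_smult_right)

lemma hermitian_range_in_supp: "hermitian A \<Longrightarrow> A *v z \<in> supp_op A"
  by (auto simp: supp_op_def ker_op_def hermitian_cinner)

lemma hermitian_orthogonal_supp_imp_ker:
  assumes A: "hermitian A" and z: "\<forall>s\<in>supp_op A. cinner s z = 0"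
  shows "A *v z = 0"
proof -
  have "cinner (A *v z) (A *v z) = cinner (A *v (A *v z)) z"
    using A by (simp add: hermitian_cinner)
  also have "\<dots> = 0"
    using z hermitian_range_in_supp[OF A] by blast
  finally show ?thesis
    by simp
qed

lemma hermitian_apply_onb_supp:
  assumes A: "hermitian A" and W: "onb_of W (supp_op A)"
  shows "A *v z = A *v (\<Sum>w\<in>W. cinner w z *s w)"
proof -
  have "\<forall>s\<in>supp_op A. cinner s (z - (\<Sum>w\<in>W. cinner w z *s w)) = 0"
    using onb_of_orthogonal[OF W] cinner_onb_residual[OF W] by blast
  then have "A *v (z - (\<Sum>w\<in>W. cinner w z *s w)) = 0"
    by (rule hermitian_orthogonal_supp_imp_ker[OF A])
  then show ?thesis
    by (simp add: matrix_vector_mult_diff_distrib)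
qed

lemma trace_onb_supp:
  assumes A: "hermitian A" and W: "onb_of W (supp_op A)"
  shows "trace A = (\<Sum>w\<in>W. cinner w (A *v w))"
proof -
  obtain U where "eigenbasis A U"
    using hermitian_eigenbasis_exists[OF A] by blast
  then have U: "onb_of U UNIV"
    by (simp add: eigenbasis_def)
  have "trace A = (\<Sum>u\<in>U. cinner u (A *v u))"
    by (rule trace_onb[OF U])
  also have "\<dots> = (\<Sum>u\<in>U. \<Sum>w\<in>W. cinner w u * cinner u (A *v w))"
  proof (rule sum.cong[OF refl])
    fix u
    show "cinner u (A *v u) = (\<Sum>w\<in>W. cinner w u * cinner u (A *v w))"
      by (subst hermitian_apply_onb_supp[OF A W, of u])
        (simp add: vec.sum vec.scale cinner_sum_right cinner_smult_right)
  qed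
  also have "\<dots> = (\<Sum>w\<in>W. \<Sum>u\<in>U. cinner w u * cinner u (A *v w))"
    by (rule sum.swap)
  also have "\<dots> = (\<Sum>w\<in>W. cinner w (A *v w))"
    by (simp add: parseval[OF U])
  finally show ?thesis .
qed

lemma onb_supp_exists: "\<exists>W. onb_of W (supp_op A)"
  using hermitian_compression_diagonalizable[OF hermitian_zero vec_subspace_supp_op] by blast

lemma density_op_supp_unit:
  assumes "density_op \<rho>"
  obtains u where "u \<in> supp_op \<rho>" "norm u = 1"
proof -
  obtain W where W: "onb_of W (supp_op \<rho>)"
    using onb_supp_exists by blast
  have "trace \<rho> = (\<Sum>w\<in>W. cinner w (\<rho> *v w))"
    using assms W by (simp add: trace_onb_supp density_op_hermitian)
  then have "W \<noteq> {}"
    using assms by (auto simp: density_op_def)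
  then obtain w where "w \<in> W"
    by blast
  then show thesis
    using W that by (auto simp: onb_of_def orthonormal_fam_def norm_eq_1_iff_cinner)
qed

lemma supp_projector_exists:
  assumes A: "hermitian A"
  obtains Q where "hermitian Q" "\<And>z. Q *v z \<in> supp_op A" "\<And>v. v \<in> supp_op A \<Longrightarrow> Q *v v = v"
    "\<And>z. A *v (Q *v z) = A *v z"
proof -
  obtain W where W: "onb_of W (supp_op A)"
    using onb_supp_exists by blast
  define Q where "Q = spectral_sum W (\<lambda>_. 1)"
  have Q: "Q *v z = (\<Sum>w\<in>W. cinner w z *s w)" for z
    by (simp add: Q_def spectral_sum_apply)
  have "hermitian Q"
    by (simp add: Q_def hermitian_spectral_sum)
  moreover have "Q *v z \<in> supp_op A" for z
    unfolding Q using W by (intro vec.subspace_sum vec.subspace_scale vec_subspace_supp_op)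
      (auto simp: onb_of_def)
  moreover have "Q *v v = v" if "v \<in> supp_op A" for v
    using W that by (simp add: Q onb_of_def)
  moreover have "A *v (Q *v z) = A *v z" for z
    by (simp add: Q hermitian_apply_onb_supp[OF A W, symmetric])
  ultimately show thesis
    by (rule that)
qed


section \<open>Pure states and the worst-case distance\<close>

lemma ket_bra_apply: "ket_bra \<phi> *v z = cinner \<phi> z *s \<phi>"
  unfolding ket_bra_def matrix_vector_mult_def cinner_def
  by (simp add: vec_eq_iff sum_distrib_left mult_ac)

lemma hermitian_ket_bra: "hermitian (ket_bra \<phi>)"
  by (simp add: hermitian_def adjoint_mat_def ket_bra_def vec_eq_iff mult.commute)

lemma trace_dist_nonneg: "hermitian (\<rho> - \<sigma>) \<Longrightarrow> 0 \<le> trace_dist \<rho> \<sigma>"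
  by (simp add: trace_dist_def trace_mat_abs_nonneg)

lemma sum_abs_le_of_cube_eq:
  fixes l :: "'a \<Rightarrow> real"
  assumes s: "0 \<le> s" and cube: "\<And>u. u \<in> U \<Longrightarrow> (l u)^3 = s * l u"
    and sq: "(\<Sum>u\<in>U. (l u)\<^sup>2) = 2 * s"
  shows "(\<Sum>u\<in>U. \<bar>l u\<bar>) \<le> 2 * sqrt s"
proof (cases "s = 0")
  case True
  then show ?thesis
    using cube by simp
next
  case False
  have "\<bar>l u\<bar> = (l u)\<^sup>2 / sqrt s" if "u \<in> U" for u
  proof (cases "l u = 0")
    case False
    then have "(l u)\<^sup>2 = s"
      using cube[OF that] by (simp add: power3_eq_cube power2_eq_square)
    then show ?thesis
      using s by (metis real_sqrt_abs real_div_sqrt)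
  qed simp
  then have "(\<Sum>u\<in>U. \<bar>l u\<bar>) = 2 * s / sqrt s"
    by (simp add: sum_divide_distrib[symmetric] sq)
  also have "\<dots> = 2 * sqrt s"
    using s by (metis real_div_sqrt times_divide_eq_right)
  finally show ?thesis
    by simp
qed

context
  fixes a b :: "complex ^ 'n::finite"
  assumes a: "cinner a a = 1" and b: "cinner b b = 1"
begin

lemma ket_bra_diff_cube:
  defines "X \<equiv> ket_bra a - ket_bra b"
  shows "X *v (X *v (X *v z)) = of_real (1 - (cmod (cinner a b))\<^sup>2) *s (X *v z)"
proof -
  define g where "g = cinner a b"
  have ba: "cinner b a = cnj g"
    by (simp add: g_def cnj_cinner)
  have X: "X *v z = cinner a z *s a - cinner b z *s b" for z
    by (simp add: X_def matrix_vector_mult_diff_rdistrib ket_bra_apply)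
  have "X *v (X *v (X *v z)) = (cinner a z * (1 - g * cnj g)) *s a - (cinner b z * (1 - g * cnj g)) *s b"
    by (simp add: X cinner_diff_right cinner_smult_right a b ba g_def[symmetric] vec_eq_iff
        algebra_simps)
  then show ?thesis
    by (simp add: X g_def[symmetric] complex_norm_square vec_eq_iff algebra_simps
        del: of_real_power)
qed

lemma trace_ket_bra_diff_square:
  defines "X \<equiv> ket_bra a - ket_bra b"
  assumes U: "onb_of U UNIV"
  shows "(\<Sum>u\<in>U. cinner u (X *v (X *v u))) = of_real (2 * (1 - (cmod (cinner a b))\<^sup>2))"
proof -
  define g where "g = cinner a b"
  have ba: "cinner b a = cnj g"
    by (simp add: g_def cnj_cinner)
  have "(\<Sum>u\<in>U. cinner u (X *v (X *v u))) = (\<Sum>u\<in>U. cinner a u * cinner u a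
      - g * (cinner b u * cinner u a) - cnj g * (cinner a u * cinner u b) + cinner b u * cinner u b)"
    by (rule sum.cong[OF refl]) (simp add: X_def matrix_vector_mult_diff_rdistrib ket_bra_apply
        cinner_diff_right cinner_add_right cinner_smult_right a b ba g_def[symmetric] algebra_simps)
  also have "\<dots> = 2 - 2 * (g * cnj g)"
    by (simp add: sum.distrib sum_subtractf sum_distrib_left[symmetric] parseval[OF U] a b ba
        g_def[symmetric])
  finally show ?thesis
    by (simp add: g_def complex_norm_square del: of_real_power)
qed

text \<open>By the two lemmas above, the eigenvalues of \<open>|a\<rangle>\<langle>a| - |b\<rangle>\<langle>b|\<close> lie in
  \<open>{0, \<plusminus>sqrt(1 - |\<langle>a,b\<rangle>|\<^sup>2)}\<close> and their squares sum to \<open>2 (1 - |\<langle>a,b\<rangle>|\<^sup>2)\<close>.\<close>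

lemma trace_dist_ket_bra_le: "trace_dist (ket_bra a) (ket_bra b) \<le> sqrt (1 - (cmod (cinner a b))\<^sup>2)"
proof -
  define X where "X = ket_bra a - ket_bra b"
  define s where "s = 1 - (cmod (cinner a b))\<^sup>2"
  have X: "hermitian X"
    by (simp add: X_def hermitian_diff hermitian_ket_bra)
  obtain U where U: "eigenbasis X U"
    using hermitian_eigenbasis_exists[OF X] by blast
  then have onb: "onb_of U UNIV"
    by (simp add: eigenbasis_def)
  define l where "l u = Re (cinner u (X *v u))" for u
  have Xu: "X *v u = of_real (l u) *s u" if "u \<in> U" for u
    using eigenbasis_apply[OF X U that] by (simp add: l_def)
  have "s \<ge> 0"
    using cmod_cinner_le_1[OF a b] by (simp add: s_def power_le_one)
  moreover have "(l u)^3 = s * l u" if u: "u \<in> U" for u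
  proof -
    have "of_real ((l u)^3) *s u = of_real (s * l u) *s u"
      using ket_bra_diff_cube[of u, folded X_def]
      by (simp add: Xu[OF u] vec.scale vector_smult_assoc power3_eq_cube s_def)
    moreover have "u \<noteq> 0"
      using onb_of_cinner[OF onb u u] by auto
    ultimately show ?thesis
      by (metis of_real_eq_iff vector_mul_rcancel)
  qed
  moreover have "(\<Sum>u\<in>U. (l u)\<^sup>2) = 2 * s"
  proof -
    have "of_real (\<Sum>u\<in>U. (l u)\<^sup>2) = (\<Sum>u\<in>U. cinner u (X *v (X *v u)))"
      unfolding of_real_sum
      by (rule sum.cong[OF refl]) (simp add: Xu vec.scale cinner_smult_right onb_of_cinner[OF onb]
          power2_eq_square)
    also have "\<dots> = of_real (2 * s)"
      using trace_ket_bra_diff_square[OF onb, folded X_def] by (simp only: s_def)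
    finally show ?thesis
      by (simp only: of_real_eq_iff)
  qed
  ultimately have "(\<Sum>u\<in>U. \<bar>l u\<bar>) \<le> 2 * sqrt s"
    by (rule sum_abs_le_of_cube_eq)
  then show ?thesis
    by (simp add: trace_dist_def trace_mat_abs_eigenbasis[OF X U] X_def[symmetric] l_def s_def)
qed

end

lemma wc_dist_le:
  assumes "u \<in> supp_op \<rho>1" "v \<in> supp_op \<rho>2" "norm u = 1" "norm v = 1"
  shows "wc_dist \<rho>1 \<rho>2 \<le> sqrt (1 - (cmod (cinner u v))\<^sup>2)"
proof -
  have "bdd_below {trace_dist (ket_bra \<phi>1) (ket_bra \<phi>2) | \<phi>1 \<phi>2.
      \<phi>1 \<in> supp_op \<rho>1 \<and> \<phi>2 \<in> supp_op \<rho>2 \<and> norm \<phi>1 = 1 \<and> norm \<phi>2 = 1}"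
    by (rule bdd_belowI[of _ 0])
      (auto intro: trace_dist_nonneg hermitian_diff hermitian_ket_bra)
  then have "wc_dist \<rho>1 \<rho>2 \<le> trace_dist (ket_bra u) (ket_bra v)"
    unfolding wc_dist_def using assms by (intro cInf_lower) auto
  also have "\<dots> \<le> sqrt (1 - (cmod (cinner u v))\<^sup>2)"
    using assms by (intro trace_dist_ket_bra_le) (simp_all add: norm_eq_1_iff_cinner)
  finally show ?thesis .
qed

lemma wc_dist_nonneg:
  assumes "density_op \<rho>1" "density_op \<rho>2"
  shows "0 \<le> wc_dist \<rho>1 \<rho>2"
proof -
  obtain u v where "u \<in> supp_op \<rho>1" "norm u = 1" "v \<in> supp_op \<rho>2" "norm v = 1"
    using density_op_supp_unit assms by metis
  then show ?thesis
    unfolding wc_dist_def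
    by (intro cInf_greatest) (auto intro: trace_dist_nonneg hermitian_diff hermitian_ket_bra)
qed

lemma wc_dist_le_1:
  assumes "density_op \<rho>1" "density_op \<rho>2"
  shows "wc_dist \<rho>1 \<rho>2 \<le> 1"
proof -
  obtain u v where uv: "u \<in> supp_op \<rho>1" "norm u = 1" "v \<in> supp_op \<rho>2" "norm v = 1"
    using density_op_supp_unit assms by metis
  have "wc_dist \<rho>1 \<rho>2 \<le> sqrt (1 - (cmod (cinner u v))\<^sup>2)"
    using uv by (intro wc_dist_le)
  also have "\<dots> \<le> 1"
    by simp
  finally show ?thesis .
qed

lemma cmod_cinner_supp_le_wc_dist:
  assumes "density_op \<rho>1" "density_op \<rho>2"
    and "u \<in> supp_op \<rho>1" "v \<in> supp_op \<rho>2" "norm u = 1" "norm v = 1"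
  shows "cmod (cinner u v) \<le> sqrt (1 - (wc_dist \<rho>1 \<rho>2)\<^sup>2)"
proof -
  have "cmod (cinner u v) \<le> 1"
    using assms by (intro cmod_cinner_le_1) (simp_all add: norm_eq_1_iff_cinner)
  then have "0 \<le> 1 - (cmod (cinner u v))\<^sup>2"
    by (simp add: power_le_one)
  moreover have "(wc_dist \<rho>1 \<rho>2)\<^sup>2 \<le> (sqrt (1 - (cmod (cinner u v))\<^sup>2))\<^sup>2"
    using wc_dist_le[OF assms(3-6)] wc_dist_nonneg[OF assms(1,2)] by (rule power_mono)
  ultimately have "(wc_dist \<rho>1 \<rho>2)\<^sup>2 \<le> 1 - (cmod (cinner u v))\<^sup>2"
    by simp
  then show ?thesis
    by (simp add: real_le_rsqrt)
qed


section \<open>The Helstrom bound for overlap \<open>c\<close>\<close>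

text \<open>\<open>helstrom_bound c x y\<close> is the trace norm of \<open>x |a\<rangle>\<langle>a| - y |b\<rangle>\<langle>b|\<close> for unit vectors
  with \<open>|\<langle>a,b\<rangle>| = c\<close>.\<close>

definition helstrom_bound :: "real \<Rightarrow> real \<Rightarrow> real \<Rightarrow> real" where
  "helstrom_bound c x y = sqrt ((1 - c\<^sup>2) * (x + y)\<^sup>2 + c\<^sup>2 * (x - y)\<^sup>2)"

lemma helstrom_bound_commute: "helstrom_bound c x y = helstrom_bound c y x"
  by (simp add: helstrom_bound_def power2_commute add.commute)

lemma helstrom_bound_alt: "helstrom_bound c x y = sqrt ((x + y)\<^sup>2 - 4 * c\<^sup>2 * x * y)"
  by (simp add: helstrom_bound_def algebra_simps power2_eq_square)

lemma helstrom_bound_one: "helstrom_bound 1 x y = \<bar>x - y\<bar>"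
  by (simp add: helstrom_bound_def)

lemma helstrom_bound_zero_left: "0 \<le> y \<Longrightarrow> helstrom_bound c 0 y = y"
  by (simp add: helstrom_bound_alt)

lemma helstrom_bound_le_add:
  assumes "0 \<le> x" "0 \<le> y"
  shows "helstrom_bound c x y \<le> x + y"
proof -
  have "helstrom_bound c x y \<le> sqrt ((x + y)\<^sup>2)"
    unfolding helstrom_bound_alt using assms by (intro real_sqrt_le_mono) simp
  then show ?thesis
    using assms by simp
qed

lemma helstrom_bound_antimono:
  assumes "0 \<le> x" "0 \<le> y" "m\<^sup>2 \<le> c\<^sup>2"
  shows "helstrom_bound c x y \<le> helstrom_bound m x y"
  unfolding helstrom_bound_alt
proof (rule real_sqrt_le_mono)
  have "m\<^sup>2 * (x * y) \<le> c\<^sup>2 * (x * y)"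
    using assms by (simp add: mult_right_mono)
  then show "(x + y)\<^sup>2 - 4 * c\<^sup>2 * x * y \<le> (x + y)\<^sup>2 - 4 * m\<^sup>2 * x * y"
    by (simp add: mult.assoc)
qed

text \<open>For \<open>0 \<le> c \<le> 1\<close> the bound is the Euclidean norm of
  \<open>(sqrt (1 - c\<^sup>2) (x + y), c (x - y))\<close>, hence subadditive.\<close>

lemma helstrom_bound_add:
  assumes "0 \<le> c" "c \<le> 1"
  shows "helstrom_bound c (x1 + x2) (y1 + y2) \<le> helstrom_bound c x1 y1 + helstrom_bound c x2 y2"
proof -
  let ?s = "sqrt (1 - c\<^sup>2)"
  have s: "?s\<^sup>2 = 1 - c\<^sup>2"
    using assms by (simp add: power_le_one)
  have norm: "helstrom_bound c x y = sqrt ((?s * (x + y))\<^sup>2 + (c * (x - y))\<^sup>2)" for x y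
    by (simp add: helstrom_bound_def power_mult_distrib s)
  have "helstrom_bound c (x1 + x2) (y1 + y2) =
      sqrt ((?s * (x1 + y1) + ?s * (x2 + y2))\<^sup>2 + (c * (x1 - y1) + c * (x2 - y2))\<^sup>2)"
    by (simp add: norm algebra_simps)
  also have "\<dots> \<le> helstrom_bound c x1 y1 + helstrom_bound c x2 y2"
    unfolding norm by (rule real_sqrt_sum_squares_triangle_ineq)
  finally show ?thesis .
qed

lemma helstrom_bound_sum:
  assumes "0 \<le> c" "c \<le> 1"
  shows "helstrom_bound c (\<Sum>i\<in>S. x i) (\<Sum>i\<in>S. y i) \<le> (\<Sum>i\<in>S. helstrom_bound c (x i) (y i))"
proof (induct S rule: infinite_finite_induct)
  case (insert a F)
  then show ?case
    using helstrom_bound_add[OF assms, of "x a" "sum x F" "y a" "sum y F"] by simp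
qed (simp_all add: helstrom_bound_def)

lemma helstrom_bound_le_weighted:
  assumes c: "0 \<le> c" "c \<le> 1" and y: "0 \<le> y"
    and r: "(\<Sum>w\<in>W. r w) = 1" and s: "(\<Sum>w\<in>W. s w) \<le> 1"
  shows "helstrom_bound c x y \<le>
    (\<Sum>w\<in>W. helstrom_bound c (x * r w) (y * s w)) + y * (1 - (\<Sum>w\<in>W. s w))"
proof -
  have "(\<Sum>w\<in>W. x * r w) + 0 = x"
    using r by (simp flip: sum_distrib_left)
  moreover have "(\<Sum>w\<in>W. y * s w) + y * (1 - (\<Sum>w\<in>W. s w)) = y"
    by (simp add: right_diff_distrib flip: sum_distrib_left)
  ultimately have "helstrom_bound c x y = helstrom_bound c ((\<Sum>w\<in>W. x * r w) + 0)
      ((\<Sum>w\<in>W. y * s w) + y * (1 - (\<Sum>w\<in>W. s w)))"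
    by simp
  also have "\<dots> \<le> helstrom_bound c (\<Sum>w\<in>W. x * r w) (\<Sum>w\<in>W. y * s w)
      + helstrom_bound c 0 (y * (1 - (\<Sum>w\<in>W. s w)))"
    by (rule helstrom_bound_add[OF c])
  also have "\<dots> \<le> (\<Sum>w\<in>W. helstrom_bound c (x * r w) (y * s w)) + y * (1 - (\<Sum>w\<in>W. s w))"
    using helstrom_bound_sum[OF c, of "\<lambda>w. x * r w" W "\<lambda>w. y * s w"] y s
    by (simp add: helstrom_bound_zero_left)
  finally show ?thesis .
qed

lemma helstrom_bound_split:
  assumes "0 \<le> c" "c \<le> 1" "p1 + p2 = 1" "q1 + q2 = 1"
  shows "2 * sqrt (1 - c\<^sup>2 + c\<^sup>2 * (p1 - q1)\<^sup>2) \<le> helstrom_bound c p1 q1 + helstrom_bound c p2 q2"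
proof -
  have sums: "p1 + q2 = 1 + (p1 - q1)" "q1 + p2 = 1 - (p1 - q1)"
    using assms(3,4) by linarith+
  have "2 * sqrt (1 - c\<^sup>2 + c\<^sup>2 * (p1 - q1)\<^sup>2) = sqrt (4 * (1 - c\<^sup>2 + c\<^sup>2 * (p1 - q1)\<^sup>2))"
    by (subst real_sqrt_mult) simp
  also have "\<dots> = helstrom_bound c (1 + (p1 - q1)) (1 - (p1 - q1))"
    by (simp add: helstrom_bound_def power2_eq_square algebra_simps)
  also have "\<dots> = helstrom_bound c (p1 + q2) (q1 + p2)"
    by (simp only: sums)
  also have "\<dots> \<le> helstrom_bound c p1 q1 + helstrom_bound c q2 p2"
    by (rule helstrom_bound_add[OF assms(1,2)])
  finally show ?thesis
    by (simp add: helstrom_bound_commute[of c q2])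
qed

lemma half_angle_exists:
  fixes C S :: real
  assumes "C\<^sup>2 + S\<^sup>2 = 1" "S \<le> 0"
  obtains p q where "p\<^sup>2 + q\<^sup>2 = 1" "2 * p\<^sup>2 - 1 = C" "2 * p * q = S"
proof
  have "C\<^sup>2 \<le> 1"
    using assms(1) by (metis le_add_same_cancel1 zero_le_power2)
  then have C: "-1 \<le> C" "C \<le> 1"
    by (auto simp: abs_square_le_1)
  define p where "p = sqrt ((1 + C) / 2)"
  define q where "q = - sqrt ((1 - C) / 2)"
  have p2: "p\<^sup>2 = (1 + C) / 2" and q2: "q\<^sup>2 = (1 - C) / 2"
    using C by (simp_all add: p_def q_def)
  show "p\<^sup>2 + q\<^sup>2 = 1" "2 * p\<^sup>2 - 1 = C"
    by (simp_all add: p2 q2 field_simps)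
  have "(2 * p * q)\<^sup>2 = 4 * p\<^sup>2 * q\<^sup>2"
    by (simp add: power_mult_distrib)
  also have "\<dots> = (1 + C) * (1 - C)"
    by (simp add: p2 q2)
  also have "\<dots> = S\<^sup>2"
    using assms(1) by (simp add: algebra_simps power2_eq_square)
  finally have "(2 * p * q)\<^sup>2 = S\<^sup>2" .
  moreover have "2 * p * q \<le> 0"
    using C by (simp add: p_def q_def mult_nonneg_nonneg)
  ultimately show "2 * p * q = S"
    using assms(2) by (smt (verit) power2_eq_iff)
qed

lemma helstrom_bound_nonneg: "c\<^sup>2 \<le> 1 \<Longrightarrow> 0 \<le> helstrom_bound c x y"
  by (simp add: helstrom_bound_def)

lemma helstrom_bound_sqrt_sq:
  assumes a: "0 \<le> a" and b: "0 \<le> b" and mu: "0 \<le> \<mu>" "\<mu> \<le> 1"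
  shows "(helstrom_bound (sqrt \<mu>) a b)\<^sup>2 = (a - b * (2 * \<mu> - 1))\<^sup>2 + (2 * b * sqrt \<mu> * sqrt (1 - \<mu>))\<^sup>2"
proof -
  have "\<mu> * (a * b) \<le> 1 * (a * b)"
    using mu a b by (intro mult_right_mono) auto
  moreover have "0 \<le> (a - b)\<^sup>2"
    by simp
  ultimately have "0 \<le> (a + b)\<^sup>2 - 4 * \<mu> * a * b"
    by (simp add: power2_eq_square algebra_simps)
  then have "(helstrom_bound (sqrt \<mu>) a b)\<^sup>2 = (a + b)\<^sup>2 - 4 * \<mu> * a * b"
    using mu by (simp add: helstrom_bound_alt)
  moreover have "(2 * b * sqrt \<mu> * sqrt (1 - \<mu>))\<^sup>2 = 4 * b\<^sup>2 * (\<mu> * (1 - \<mu>))"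
    using mu by (simp add: power_mult_distrib)
  ultimately show ?thesis
    by (simp add: power2_eq_square algebra_simps)
qed

lemma double_angle_difference:
  fixes m n p q :: real
  assumes "m\<^sup>2 + n\<^sup>2 = 1" "p\<^sup>2 + q\<^sup>2 = 1"
  shows "2 * (m * p + n * q)\<^sup>2 - 1 = (m\<^sup>2 - n\<^sup>2) * (2 * p\<^sup>2 - 1) + 2 * m * n * (2 * p * q)"
proof -
  have "2 * (m * p + n * q)\<^sup>2 - 1 = 2 * m\<^sup>2 * p\<^sup>2 + 2 * m * n * (2 * p * q) + 2 * n\<^sup>2 * q\<^sup>2 - 1"
    by (simp add: power2_eq_square algebra_simps)
  also have "\<dots> = (m\<^sup>2 - n\<^sup>2) * (2 * p\<^sup>2 - 1) + 2 * m * n * (2 * p * q)"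
  proof -
    have q: "q\<^sup>2 = 1 - p\<^sup>2" and n: "n\<^sup>2 = 1 - m\<^sup>2"
      using assms by linarith+
    show ?thesis
      by (simp add: q n algebra_simps)
  qed
  finally show ?thesis .
qed

text \<open>The two-dimensional problem: \<open>(p, q)\<close> is a unit vector in the plane spanned by orthonormal
  \<open>w, e\<close>, the first state is \<open>w\<close> and the second is \<open>sqrt \<mu> w + sqrt (1 - \<mu>) e\<close>. The optimal
  \<open>(p, q)\<close> is the positive eigenvector of the weighted difference of the two projectors; \<open>(C, S)\<close>
  is its double angle.\<close>

lemma qubit_helstrom:
  assumes a: "0 \<le> a" and b: "0 \<le> b" and mu: "0 \<le> \<mu>" "\<mu> \<le> 1"
  obtains p q where "p\<^sup>2 + q\<^sup>2 = 1"
    "helstrom_bound (sqrt \<mu>) a b \<le> a * (2 * p\<^sup>2 - 1) - b * (2 * (sqrt \<mu> * p + sqrt (1 - \<mu>) * q)\<^sup>2 - 1)"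
proof -
  define m where "m = sqrt \<mu>"
  define n where "n = sqrt (1 - \<mu>)"
  have m2: "m\<^sup>2 = \<mu>" and n2: "n\<^sup>2 = 1 - \<mu>" and mn: "0 \<le> m" "0 \<le> n"
    using mu by (simp_all add: m_def n_def)
  define N where "N = helstrom_bound m a b"
  have N2: "N\<^sup>2 = (a - b * (2 * \<mu> - 1))\<^sup>2 + (2 * b * m * n)\<^sup>2"
    unfolding N_def m_def n_def by (rule helstrom_bound_sqrt_sq[OF a b mu])
  show thesis
  proof (cases "N = 0")
    case True
    then have "(a - b * (2 * \<mu> - 1))\<^sup>2 = 0"
      using N2 by (simp add: add_nonneg_eq_0_iff)
    then have "a * (2 * 1\<^sup>2 - 1) - b * (2 * (m * 1 + n * 0)\<^sup>2 - 1) = 0"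
      by (simp add: m2)
    then show ?thesis
      using True that[of 1 0] by (simp add: N_def m_def n_def)
  next
    case False
    moreover have "0 \<le> N"
      unfolding N_def using mu by (intro helstrom_bound_nonneg) (simp add: m2)
    ultimately have N: "0 < N"
      by simp
    define C where "C = (a - b * (2 * \<mu> - 1)) / N"
    define S where "S = - (2 * b * m * n) / N"
    have "C\<^sup>2 + S\<^sup>2 = ((a - b * (2 * \<mu> - 1))\<^sup>2 + (2 * b * m * n)\<^sup>2) / N\<^sup>2"
      by (simp add: C_def S_def power_divide add_divide_distrib)
    also have "\<dots> = 1"
      using N by (simp add: N2[symmetric])
    finally have "C\<^sup>2 + S\<^sup>2 = 1" .
    moreover have "S \<le> 0"
      using N b mn by (simp add: S_def divide_nonpos_pos)
    ultimately obtain p q where pq: "p\<^sup>2 + q\<^sup>2 = 1" "2 * p\<^sup>2 - 1 = C" "2 * p * q = S"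
      by (rule half_angle_exists)
    have "m\<^sup>2 + n\<^sup>2 = 1"
      by (simp add: m2 n2)
    then have "a * (2 * p\<^sup>2 - 1) - b * (2 * (m * p + n * q)\<^sup>2 - 1) =
        (a - b * (2 * \<mu> - 1)) * C - (2 * b * m * n) * S"
      by (simp only: double_angle_difference pq m2 n2) (simp add: algebra_simps)
    also have "\<dots> = ((a - b * (2 * \<mu> - 1))\<^sup>2 + (2 * b * m * n)\<^sup>2) / N"
      by (simp add: C_def S_def power2_eq_square add_divide_distrib)
    also have "\<dots> = N"
      using N by (simp only: N2[symmetric]) (simp add: power2_eq_square)
    finally show ?thesis
      using pq(1) that by (simp add: N_def m_def n_def)
  qed
qed

lemma qubit_helstrom_overlap:
  assumes a: "0 \<le> a" and b: "0 \<le> b" and mu: "0 \<le> \<mu>" "\<mu> \<le> c\<^sup>2" "\<mu> < 1"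
  obtains p q where "p\<^sup>2 + q\<^sup>2 = 1" "\<mu> = 0 \<Longrightarrow> q = 0"
    "helstrom_bound c a b \<le> a * (2 * p\<^sup>2 - 1) - b * (2 * (sqrt \<mu> * p + sqrt (1 - \<mu>) * q)\<^sup>2 - 1)"
proof (cases "\<mu> = 0")
  case True
  then show thesis
    using that[of 1 0] helstrom_bound_le_add[OF a b] by simp
next
  case False
  obtain p q where "p\<^sup>2 + q\<^sup>2 = 1"
    "helstrom_bound (sqrt \<mu>) a b \<le> a * (2 * p\<^sup>2 - 1) - b * (2 * (sqrt \<mu> * p + sqrt (1 - \<mu>) * q)\<^sup>2 - 1)"
    using qubit_helstrom[OF a b mu(1)] mu(3) by auto
  moreover have "helstrom_bound c a b \<le> helstrom_bound (sqrt \<mu>) a b"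
    using a b mu by (intro helstrom_bound_antimono) auto
  ultimately show thesis
    using that False by fastforce
qed


section \<open>The Helstrom bound for states with overlapping supports\<close>

text \<open>With prior weights \<open>x, y\<close> and the measurement \<open>{P, 1 - P}\<close>, \<open>P\<close> the projector onto the span
  of \<open>f\<close>, this is twice the success probability of guessing the state, minus \<open>x + y\<close>.\<close>

definition discrimination_bias ::
    "'n::finite cmat \<Rightarrow> 'n cmat \<Rightarrow> real \<Rightarrow> real \<Rightarrow> 'i set \<Rightarrow> ('i \<Rightarrow> complex ^ 'n) \<Rightarrow> real" where
  "discrimination_bias \<rho>1 \<rho>2 x y I f = x * (2 * proj_trace \<rho>1 I f - 1) - y * (2 * proj_trace \<rho>2 I f - 1)"

lemma discrimination_bias_le_trace_dist:
  assumes "density_op \<rho>1" "density_op \<rho>2" "finite I" "orthonormal_fam I f"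
  shows "discrimination_bias \<rho>1 \<rho>2 1 1 I f \<le> 2 * trace_dist \<rho>1 \<rho>2"
proof -
  have "discrimination_bias \<rho>1 \<rho>2 1 1 I f = 2 * proj_trace (\<rho>1 - \<rho>2) I f - Re (trace (\<rho>1 - \<rho>2))"
    using assms(1,2) by (simp add: discrimination_bias_def proj_trace_diff trace_sub density_op_def)
  also have "\<dots> \<le> 2 * trace_dist \<rho>1 \<rho>2"
    using assms by (simp add: trace_dist_def trace_mat_abs_ge hermitian_diff density_op_hermitian)
  finally show ?thesis .
qed

lemma helstrom_bound_one_attained:
  assumes "density_op \<rho>1" "density_op \<rho>2"
  obtains I and f :: "complex ^ 'n \<Rightarrow> complex ^ 'n::finite" where "finite I" "orthonormal_fam I f"
    "helstrom_bound 1 x y \<le> discrimination_bias \<rho>1 \<rho>2 x y I f"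
proof (cases "y \<le> x")
  case True
  obtain U :: "(complex ^ 'n) set" where U: "eigenbasis 0 U"
    using hermitian_eigenbasis_exists[OF hermitian_zero] by blast
  then have "finite U" "orthonormal_fam U id" "proj_trace \<rho>1 U id = 1" "proj_trace \<rho>2 U id = 1"
    using assms by (auto simp: eigenbasis_def onb_of_def proj_trace_onb density_op_def)
  then show thesis
    using True by (intro that[of U id]) (auto simp: helstrom_bound_one discrimination_bias_def)
next
  case False
  have "orthonormal_fam {} (id :: complex ^ 'n \<Rightarrow> complex ^ 'n)"
    by (simp add: orthonormal_fam_def)
  then show thesis
    using False by (intro that[of "{}"]) (auto simp: helstrom_bound_one discrimination_bias_def
        proj_trace_def)
qed

lemma compression_le_overlap:
  assumes Q: "hermitian Q" "\<And>z. Q *v (Q *v z) = Q *v z" "\<And>z. Q *v z \<in> supp_op \<rho>"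
    and overlap: "\<And>v. v \<in> supp_op \<rho> \<Longrightarrow> norm v = 1 \<Longrightarrow> cmod (cinner w v) \<le> c"
    and w: "norm w = 1"
  shows "Re (cinner w (Q *v w)) \<le> c\<^sup>2"
proof (cases "Q *v w = 0")
  case False
  define r where "r = norm (Q *v w)"
  have r: "0 < r"
    using False by (simp add: r_def)
  have "cinner w (Q *v w) = cinner (Q *v w) (Q *v w)"
    using hermitian_cinner[OF Q(1), of w "Q *v w"] Q(2)[of w] by simp
  then have wQw: "cinner w (Q *v w) = of_real (r\<^sup>2)"
    by (simp add: cinner_self r_def)
  have "vec.subspace (supp_op \<rho>)"
    by (rule vec_subspace_supp_op)
  then have "(1 / r) *\<^sub>R (Q *v w) \<in> supp_op \<rho>"
    using Q(3) by (metis smult_of_real vec.subspace_scale)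
  moreover have "norm ((1 / r) *\<^sub>R (Q *v w)) = 1"
    using r by (simp add: r_def)
  ultimately have "cmod (cinner w ((1 / r) *\<^sub>R (Q *v w))) \<le> c"
    by (rule overlap)
  then have "r \<le> c"
    using r by (simp add: cinner_scaleR_right wQw norm_mult power2_eq_square)
  then show ?thesis
    using r by (simp add: wQw power_mono)
qed simp

text \<open>Jordan's lemma for the support of \<open>\<rho>1\<close> and the projector \<open>Q\<close> onto the support of \<open>\<rho>2\<close>:
  \<open>W\<close> is an orthonormal basis of the support of \<open>\<rho>1\<close> diagonalising the compression of \<open>Q\<close>.
  Then \<open>Q w = mu w w + sqrt (mu w (1 - mu w)) partner w\<close> with \<open>partner w\<close> orthogonal to the
  support of \<open>\<rho>1\<close>, and the planes spanned by \<open>w\<close> and \<open>partner w\<close> are mutually orthogonal.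
  If \<open>mu w = 0\<close>, division by zero makes \<open>partner w = 0\<close>.\<close>

locale jordan_basis =
  fixes \<rho>1 \<rho>2 Q :: "'n::finite cmat" and W :: "(complex ^ 'n) set"
  assumes density1: "density_op \<rho>1" and density2: "density_op \<rho>2"
    and Q_hermitian: "hermitian Q" and Q_idem: "\<And>z. Q *v (Q *v z) = Q *v z"
    and Q_\<rho>2: "\<And>z. Q *v (\<rho>2 *v z) = \<rho>2 *v z" and \<rho>2_Q: "\<And>z. \<rho>2 *v (Q *v z) = \<rho>2 *v z"
    and W: "onb_of W (supp_op \<rho>1)"
    and W_diag: "\<And>w w'. w \<in> W \<Longrightarrow> w' \<in> W \<Longrightarrow> w \<noteq> w' \<Longrightarrow> cinner w (Q *v w') = 0"
    and compression_lt_1: "\<And>w. w \<in> W \<Longrightarrow> Re (cinner w (Q *v w)) < 1"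
begin

definition mu :: "complex ^ 'n \<Rightarrow> real" where
  "mu w = Re (cinner w (Q *v w))"

definition partner :: "complex ^ 'n \<Rightarrow> complex ^ 'n" where
  "partner w = (1 / sqrt (mu w * (1 - mu w))) *\<^sub>R (Q *v w - of_real (mu w) *s w)"

definition rotated :: "(complex ^ 'n \<Rightarrow> real) \<Rightarrow> (complex ^ 'n \<Rightarrow> real) \<Rightarrow> complex ^ 'n \<Rightarrow> complex ^ 'n" where
  "rotated p q w = of_real (p w) *s w + of_real (q w) *s partner w"

definition weight1 :: "complex ^ 'n \<Rightarrow> real" where
  "weight1 w = Re (cinner w (\<rho>1 *v w))"

text \<open>The weight of \<open>\<rho>2\<close> on the unit vector \<open>Q w / sqrt (mu w)\<close> (and \<open>0\<close> if \<open>mu w = 0\<close>).\<close>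

definition weight2 :: "complex ^ 'n \<Rightarrow> real" where
  "weight2 w = Re (cinner (Q *v w) (\<rho>2 *v (Q *v w))) / mu w"

lemma finite_W: "finite W"
  using W by (simp add: onb_of_def)

lemma W_cinner: "w \<in> W \<Longrightarrow> w' \<in> W \<Longrightarrow> cinner w' w = (if w' = w then 1 else 0)"
  using onb_of_cinner[OF W] by blast

lemma cinner_Q_Q: "cinner (Q *v z) (Q *v z') = cinner z (Q *v z')"
  using hermitian_cinner[OF Q_hermitian, of z "Q *v z'"] Q_idem by simp

lemma cinner_Q: "cinner w (Q *v w) = of_real (mu w)"
  unfolding mu_def by (rule hermitian_quadratic_real[OF Q_hermitian])

lemma mu_eq_norm: "mu w = (norm (Q *v w))\<^sup>2"
  using cinner_Q_Q[of w w] by (simp add: mu_def norm_sq_cinner)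

lemma mu_nonneg: "0 \<le> mu w"
  by (simp add: mu_eq_norm)

lemma mu_lt_1: "w \<in> W \<Longrightarrow> mu w < 1"
  by (simp add: mu_def compression_lt_1)

lemma W_cinner_Q: "w \<in> W \<Longrightarrow> w' \<in> W \<Longrightarrow> cinner w' (Q *v w) = (if w' = w then of_real (mu w) else 0)"
  using W_diag cinner_Q by auto

lemma weight1_nonneg: "0 \<le> weight1 w"
  using density1 by (simp add: weight1_def psd_quadratic_nonneg density_op_psd)

lemma weight2_nonneg: "0 \<le> weight2 w"
  using density2 mu_nonneg by (simp add: weight2_def psd_quadratic_nonneg density_op_psd)

lemma partner_orthogonal: "w \<in> W \<Longrightarrow> w' \<in> W \<Longrightarrow> cinner w' (partner w) = 0"
  by (simp add: partner_def cinner_scaleR_right cinner_diff_right cinner_smult_right W_cinner_Q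
      W_cinner)

lemma partner_orthonormal:
  assumes w: "w \<in> W" and w': "w' \<in> W" and pos: "0 < mu w"
  shows "cinner (partner w') (partner w) = (if w' = w then 1 else 0)"
proof (cases "w' = w")
  case True
  define k where "k = 1 / sqrt (mu w * (1 - mu w))"
  have "cinner (Q *v w) w = of_real (mu w)"
    by (metis cinner_Q cnj_cinner complex_cnj_complex_of_real)
  then have "cinner (partner w) (partner w) = of_real (k * k) * of_real (mu w - mu w * mu w)"
    unfolding partner_def k_def[symmetric]
    by (simp add: cinner_scaleR_left cinner_scaleR_right cinner_diff_left cinner_diff_right
        cinner_smult_left cinner_smult_right cinner_Q_Q cinner_Q W_cinner[OF w w] algebra_simps)
  also have "\<dots> = 1"
    using pos mu_lt_1[OF w] by (simp add: k_def algebra_simps flip: of_real_mult)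
  finally show ?thesis
    using True by simp
next
  case False
  have "cinner (Q *v w') w = cnj (cinner w (Q *v w'))"
    by (simp add: cnj_cinner)
  then show ?thesis
    using False w w' unfolding partner_def
    by (simp add: cinner_scaleR_left cinner_scaleR_right cinner_diff_left cinner_diff_right
        cinner_smult_left cinner_smult_right cinner_Q_Q W_cinner_Q W_cinner)
qed

lemma \<rho>1_partner:
  assumes "w \<in> W"
  shows "\<rho>1 *v partner w = 0"
proof (rule hermitian_orthogonal_supp_imp_ker)
  show "hermitian \<rho>1"
    using density1 by (rule density_op_hermitian)
  show "\<forall>s\<in>supp_op \<rho>1. cinner s (partner w) = 0"
    using onb_of_orthogonal[OF W] partner_orthogonal[OF assms] by blast
qed

lemma Q_partner: "Q *v partner w = ((1 - mu w) / sqrt (mu w * (1 - mu w))) *\<^sub>R (Q *v w)"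
proof -
  have "Q *v partner w = (1 / sqrt (mu w * (1 - mu w))) *\<^sub>R (Q *v w - mu w *\<^sub>R (Q *v w))"
    by (simp add: partner_def matrix_vector_mult_scaleR matrix_vector_mult_diff_distrib vec.scale
        Q_idem smult_of_real)
  then show ?thesis
    by (simp add: scaleR_diff_left scaleR_diff_right diff_divide_distrib)
qed

lemma orthonormal_rotated:
  assumes pq: "\<And>w. w \<in> W \<Longrightarrow> (p w)\<^sup>2 + (q w)\<^sup>2 = 1" "\<And>w. w \<in> W \<Longrightarrow> mu w = 0 \<Longrightarrow> q w = 0"
  shows "orthonormal_fam W (rotated p q)"
  unfolding orthonormal_fam_def
proof (intro ballI)
  fix w' w assume w': "w' \<in> W" and w: "w \<in> W"
  have partner_term: "of_real (q w') * of_real (q w) * cinner (partner w') (partner w) =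
      (if w' = w then of_real ((q w)\<^sup>2) else (0 :: complex))"
  proof (cases "mu w = 0")
    case False
    then show ?thesis
      using mu_nonneg[of w] partner_orthonormal[OF w w'] by (simp add: power2_eq_square)
  qed (simp add: pq(2)[OF w])
  have "cinner (partner w') w = 0"
    using partner_orthogonal[OF w' w] by (rule cinner_eq_0_commute)
  then have "cinner (rotated p q w') (rotated p q w) =
      of_real (p w') * of_real (p w) * cinner w' w
      + of_real (q w') * of_real (q w) * cinner (partner w') (partner w)"
    by (simp add: rotated_def cinner_add_left cinner_add_right cinner_smult_left cinner_smult_right
        partner_orthogonal[OF w w'] algebra_simps)
  also have "\<dots> = (if w' = w then 1 else 0)"
    using partner_term W_cinner[OF w w'] pq(1)[OF w]
    by (auto simp: power2_eq_square simp flip: of_real_mult of_real_add)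
  finally show "cinner (rotated p q w') (rotated p q w) = (if w' = w then 1 else 0)" .
qed

lemma quadratic_\<rho>1_rotated:
  assumes "w \<in> W"
  shows "Re (cinner (rotated p q w) (\<rho>1 *v rotated p q w)) = (p w)\<^sup>2 * weight1 w"
proof -
  have "cinner (partner w) (\<rho>1 *v w) = 0"
    using hermitian_cinner[OF density_op_hermitian[OF density1], of "partner w" w]
      \<rho>1_partner[OF assms] by simp
  then show ?thesis
    by (simp add: rotated_def weight1_def matrix_vector_right_distrib vec.scale \<rho>1_partner[OF assms]
        cinner_add_left cinner_smult_left cinner_smult_right power2_eq_square)
qed

lemma quadratic_\<rho>2_rotated:
  assumes w: "w \<in> W" and q: "mu w = 0 \<Longrightarrow> q w = 0"
  shows "Re (cinner (rotated p q w) (\<rho>2 *v rotated p q w)) =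
    (sqrt (mu w) * p w + sqrt (1 - mu w) * q w)\<^sup>2 * weight2 w"
proof -
  have \<rho>2_compress: "cinner z (\<rho>2 *v z) = cinner (Q *v z) (\<rho>2 *v (Q *v z))" for z
    using hermitian_cinner[OF Q_hermitian, of z "\<rho>2 *v (Q *v z)"] \<rho>2_Q Q_\<rho>2 by simp
  define t where "t = p w + q w * ((1 - mu w) / sqrt (mu w * (1 - mu w)))"
  have "Q *v rotated p q w = t *\<^sub>R (Q *v w)"
    by (simp add: rotated_def t_def matrix_vector_right_distrib smult_of_real
        matrix_vector_mult_scaleR Q_partner scaleR_add_left)
  then have "Re (cinner (rotated p q w) (\<rho>2 *v rotated p q w)) =
      t\<^sup>2 * Re (cinner (Q *v w) (\<rho>2 *v (Q *v w)))"
    using \<rho>2_compress[of "rotated p q w"]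
    by (simp add: matrix_vector_mult_scaleR cinner_scaleR_left cinner_scaleR_right power2_eq_square)
  also have "\<dots> = (sqrt (mu w) * t)\<^sup>2 * weight2 w"
  proof (cases "mu w = 0")
    case True
    then have "Q *v w = 0"
      by (simp add: mu_eq_norm)
    then show ?thesis
      using True by simp
  qed (simp add: weight2_def power_mult_distrib mu_nonneg)
  also have "sqrt (mu w) * t = sqrt (mu w) * p w + sqrt (1 - mu w) * q w"
  proof (cases "mu w = 0")
    case False
    then have "sqrt (mu w) * ((1 - mu w) / sqrt (mu w * (1 - mu w))) = sqrt (1 - mu w)"
      using mu_nonneg[of w] mu_lt_1[OF w] by (simp add: real_sqrt_mult real_div_sqrt)
    moreover have "sqrt (mu w) * t =
        sqrt (mu w) * p w + q w * (sqrt (mu w) * ((1 - mu w) / sqrt (mu w * (1 - mu w))))"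
      by (simp add: t_def algebra_simps)
    ultimately show ?thesis
      by simp
  qed (simp add: q)
  finally show ?thesis .
qed

lemma sum_weight1: "(\<Sum>w\<in>W. weight1 w) = 1"
  using trace_onb_supp[OF density_op_hermitian[OF density1] W] density1
  by (simp add: weight1_def density_op_def flip: Re_sum)

text \<open>The vectors \<open>Q w / sqrt (mu w)\<close> with \<open>mu w > 0\<close> are orthonormal.\<close>

lemma sum_weight2_le_1: "(\<Sum>w\<in>W. weight2 w) \<le> 1"
proof -
  define W' where "W' = {w \<in> W. mu w \<noteq> 0}"
  define f where "f w = (1 / sqrt (mu w)) *\<^sub>R (Q *v w)" for w
  have "orthonormal_fam W' f"
    unfolding orthonormal_fam_def
  proof (intro ballI)
    fix w' w assume "w' \<in> W'" "w \<in> W'"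
    then show "cinner (f w') (f w) = (if w' = w then 1 else 0)"
      using W_cinner_Q[of w w'] mu_nonneg[of w]
      by (auto simp: W'_def f_def cinner_scaleR_left cinner_scaleR_right cinner_Q_Q
          real_sqrt_mult_self simp flip: of_real_mult)
  qed
  moreover have "finite W'"
    using finite_W by (simp add: W'_def)
  ultimately have "proj_trace \<rho>2 W' f \<le> 1"
    using proj_trace_le_trace[OF density_op_psd[OF density2]] density2
    by (simp add: density_op_def)
  moreover have "proj_trace \<rho>2 W' f = (\<Sum>w\<in>W'. weight2 w)"
    unfolding proj_trace_def
    by (rule sum.cong) (auto simp: W'_def f_def weight2_def matrix_vector_mult_scaleR
        cinner_scaleR_left cinner_scaleR_right mu_nonneg)
  moreover have "(\<Sum>w\<in>W'. weight2 w) = (\<Sum>w\<in>W. weight2 w)"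
    by (rule sum.mono_neutral_left) (auto simp: finite_W W'_def weight2_def)
  ultimately show ?thesis
    by simp
qed

lemma discrimination_bias_rotated:
  assumes "\<And>w. w \<in> W \<Longrightarrow> mu w = 0 \<Longrightarrow> q w = 0"
  shows "discrimination_bias \<rho>1 \<rho>2 x y W (rotated p q) =
    (\<Sum>w\<in>W. x * weight1 w * (2 * (p w)\<^sup>2 - 1)
      - y * weight2 w * (2 * (sqrt (mu w) * p w + sqrt (1 - mu w) * q w)\<^sup>2 - 1))
    + y * (1 - (\<Sum>w\<in>W. weight2 w))"
proof -
  let ?\<beta> = "\<lambda>w. (sqrt (mu w) * p w + sqrt (1 - mu w) * q w)\<^sup>2"
  have "(\<Sum>w\<in>W. x * weight1 w * (2 * (p w)\<^sup>2 - 1) - y * weight2 w * (2 * ?\<beta> w - 1)) =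
      2 * x * (\<Sum>w\<in>W. (p w)\<^sup>2 * weight1 w) - x * (\<Sum>w\<in>W. weight1 w)
      - 2 * y * (\<Sum>w\<in>W. ?\<beta> w * weight2 w) + y * (\<Sum>w\<in>W. weight2 w)"
    by (simp add: algebra_simps sum.distrib sum_subtractf sum_distrib_left)
  moreover have "discrimination_bias \<rho>1 \<rho>2 x y W (rotated p q) =
      x * (2 * (\<Sum>w\<in>W. (p w)\<^sup>2 * weight1 w) - 1) - y * (2 * (\<Sum>w\<in>W. ?\<beta> w * weight2 w) - 1)"
    using assms by (simp add: discrimination_bias_def proj_trace_def quadratic_\<rho>1_rotated
        quadratic_\<rho>2_rotated cong: sum.cong)
  ultimately show ?thesis
    by (simp add: sum_weight1 algebra_simps)
qed

theorem helstrom_bound_le_bias: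
  assumes c: "0 \<le> c" "c \<le> 1" and overlap: "\<And>w. w \<in> W \<Longrightarrow> mu w \<le> c\<^sup>2"
    and x: "0 \<le> x" and y: "0 \<le> y"
  obtains f where "orthonormal_fam W f" "helstrom_bound c x y \<le> discrimination_bias \<rho>1 \<rho>2 x y W f"
proof -
  have "\<forall>w\<in>W. \<exists>p q. p\<^sup>2 + q\<^sup>2 = 1 \<and> (mu w = 0 \<longrightarrow> q = 0) \<and>
      helstrom_bound c (x * weight1 w) (y * weight2 w) \<le> x * weight1 w * (2 * p\<^sup>2 - 1)
        - y * weight2 w * (2 * (sqrt (mu w) * p + sqrt (1 - mu w) * q)\<^sup>2 - 1)"
  proof
    fix w assume w: "w \<in> W"
    have "0 \<le> x * weight1 w" "0 \<le> y * weight2 w"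
      using x y weight1_nonneg weight2_nonneg by simp_all
    from qubit_helstrom_overlap[OF this mu_nonneg overlap[OF w] mu_lt_1[OF w]]
    show "\<exists>p q. p\<^sup>2 + q\<^sup>2 = 1 \<and> (mu w = 0 \<longrightarrow> q = 0) \<and>
        helstrom_bound c (x * weight1 w) (y * weight2 w) \<le> x * weight1 w * (2 * p\<^sup>2 - 1)
          - y * weight2 w * (2 * (sqrt (mu w) * p + sqrt (1 - mu w) * q)\<^sup>2 - 1)"
      by blast
  qed
  then obtain p q where pq: "\<And>w. w \<in> W \<Longrightarrow> (p w)\<^sup>2 + (q w)\<^sup>2 = 1"
    "\<And>w. w \<in> W \<Longrightarrow> mu w = 0 \<Longrightarrow> q w = 0"
    and opt: "\<And>w. w \<in> W \<Longrightarrow> helstrom_bound c (x * weight1 w) (y * weight2 w) \<le>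
      x * weight1 w * (2 * (p w)\<^sup>2 - 1)
        - y * weight2 w * (2 * (sqrt (mu w) * p w + sqrt (1 - mu w) * q w)\<^sup>2 - 1)"
    by metis
  have "helstrom_bound c x y \<le>
      (\<Sum>w\<in>W. helstrom_bound c (x * weight1 w) (y * weight2 w)) + y * (1 - (\<Sum>w\<in>W. weight2 w))"
    by (rule helstrom_bound_le_weighted[OF c y sum_weight1 sum_weight2_le_1])
  also have "\<dots> \<le> (\<Sum>w\<in>W. x * weight1 w * (2 * (p w)\<^sup>2 - 1)
      - y * weight2 w * (2 * (sqrt (mu w) * p w + sqrt (1 - mu w) * q w)\<^sup>2 - 1))
    + y * (1 - (\<Sum>w\<in>W. weight2 w))"
    using opt by (simp add: sum_mono)
  also have "\<dots> = discrimination_bias \<rho>1 \<rho>2 x y W (rotated p q)"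
    by (rule discrimination_bias_rotated[OF pq(2), symmetric])
  finally show thesis
    using that orthonormal_rotated[of p q] pq by blast
qed
end

theorem helstrom_bound_overlapping_supports:
  fixes \<rho>1 \<rho>2 :: "'n::finite cmat"
  assumes d1: "density_op \<rho>1" and d2: "density_op \<rho>2" and c: "0 \<le> c" "c \<le> 1"
    and overlap: "\<And>u v. u \<in> supp_op \<rho>1 \<Longrightarrow> v \<in> supp_op \<rho>2 \<Longrightarrow> norm u = 1 \<Longrightarrow> norm v = 1 \<Longrightarrow>
      cmod (cinner u v) \<le> c"
    and x: "0 \<le> x" and y: "0 \<le> y"
  obtains I and f :: "complex ^ 'n \<Rightarrow> complex ^ 'n" where "finite I" "orthonormal_fam I f"
    "helstrom_bound c x y \<le> discrimination_bias \<rho>1 \<rho>2 x y I f"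
proof (cases "c = 1")
  case True
  then show thesis
    using helstrom_bound_one_attained[OF d1 d2, of x y] that by blast
next
  case False
  then have "c\<^sup>2 < 1"
    using c by (simp add: abs_square_less_1)
  have H2: "hermitian \<rho>2"
    using d2 by (rule density_op_hermitian)
  obtain Q where Q: "hermitian Q" "\<And>z. Q *v z \<in> supp_op \<rho>2"
    "\<And>v. v \<in> supp_op \<rho>2 \<Longrightarrow> Q *v v = v" "\<And>z. \<rho>2 *v (Q *v z) = \<rho>2 *v z"
    using supp_projector_exists[OF H2] by blast
  have Q_idem: "Q *v (Q *v z) = Q *v z" for z
    using Q(2,3) by blast
  obtain W where W: "onb_of W (supp_op \<rho>1)"
    and diag: "\<forall>w\<in>W. \<forall>w'\<in>W. w \<noteq> w' \<longrightarrow> cinner w (Q *v w') = 0"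
    using hermitian_compression_diagonalizable[OF Q(1) vec_subspace_supp_op] by blast
  have le: "Re (cinner w (Q *v w)) \<le> c\<^sup>2" if "w \<in> W" for w
  proof (rule compression_le_overlap[OF Q(1) Q_idem Q(2)])
    have "w \<in> supp_op \<rho>1" "norm w = 1"
      using W that by (auto simp: onb_of_def orthonormal_fam_def norm_eq_1_iff_cinner)
    then show "\<And>v. v \<in> supp_op \<rho>2 \<Longrightarrow> norm v = 1 \<Longrightarrow> cmod (cinner w v) \<le> c" "norm w = 1"
      by (simp_all add: overlap)
  qed
  interpret jordan_basis \<rho>1 \<rho>2 Q W
  proof
    show "Q *v (\<rho>2 *v z) = \<rho>2 *v z" for z
      using Q(3) hermitian_range_in_supp[OF H2] by blast
    show "Re (cinner w (Q *v w)) < 1" if "w \<in> W" for w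
      using le[OF that] \<open>c\<^sup>2 < 1\<close> by linarith
  qed (use d1 d2 Q Q_idem W diag in auto)
  obtain f where "orthonormal_fam W f" "helstrom_bound c x y \<le> discrimination_bias \<rho>1 \<rho>2 x y W f"
    using helstrom_bound_le_bias[OF c _ x y] le by (auto simp: mu_def)
  then show thesis
    using that finite_W by blast
qed

corollary trace_dist_ge_overlap:
  assumes d1: "density_op \<rho>1" and d2: "density_op \<rho>2" and c: "0 \<le> c" "c \<le> 1"
    and overlap: "\<And>u v. u \<in> supp_op \<rho>1 \<Longrightarrow> v \<in> supp_op \<rho>2 \<Longrightarrow> norm u = 1 \<Longrightarrow> norm v = 1 \<Longrightarrow>
      cmod (cinner u v) \<le> c"
  shows "sqrt (1 - c\<^sup>2) \<le> trace_dist \<rho>1 \<rho>2"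
proof -
  obtain I and f :: "complex ^ 'a \<Rightarrow> complex ^ 'a" where If: "finite I" "orthonormal_fam I f"
    and "helstrom_bound c 1 1 \<le> discrimination_bias \<rho>1 \<rho>2 1 1 I f"
    using helstrom_bound_overlapping_supports[OF d1 d2 c overlap zero_le_one zero_le_one] by blast
  moreover have "helstrom_bound c 1 1 = sqrt 4 * sqrt (1 - c\<^sup>2)"
    unfolding helstrom_bound_def real_sqrt_mult[symmetric] by (simp add: algebra_simps)
  ultimately show ?thesis
    using discrimination_bias_le_trace_dist[OF d1 d2 If] by simp
qed


section \<open>Tensor products\<close>

definition tensor_vec :: "complex ^ 'a \<Rightarrow> complex ^ 'b \<Rightarrow> complex ^ ('a \<times> 'b)" where
  "tensor_vec a b = (\<chi> p. a $ fst p * b $ snd p)"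

lemma sum_UNIV_prod: "(\<Sum>p\<in>UNIV. f p) = (\<Sum>i\<in>UNIV. \<Sum>j\<in>UNIV. f (i, j))"
  by (simp add: sum.cartesian_product flip: UNIV_Times_UNIV)

lemma kron_tensor_vec: "kron A B *v tensor_vec a b = tensor_vec (A *v a) (B *v b)"
  unfolding kron_def tensor_vec_def matrix_vector_mult_def
  by (simp add: vec_eq_iff sum_UNIV_prod sum_product mult_ac)

lemma cinner_tensor_vec: "cinner (tensor_vec a b) (tensor_vec c d) = cinner a c * cinner b d"
  unfolding tensor_vec_def cinner_def by (simp add: sum_UNIV_prod sum_product mult_ac)

lemma trace_kron: "trace (kron A B) = trace A * trace B"
  unfolding trace_def kron_def by (simp add: sum_UNIV_prod sum_product)

lemma hermitian_kron: "hermitian A \<Longrightarrow> hermitian B \<Longrightarrow> hermitian (kron A B)"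
  by (simp add: hermitian_def adjoint_mat_def kron_def vec_eq_iff)

lemma quadratic_kron_tensor_vec:
  assumes "hermitian A" "hermitian B"
  shows "Re (cinner (tensor_vec a b) (kron A B *v tensor_vec a b)) =
    Re (cinner a (A *v a)) * Re (cinner b (B *v b))"
proof -
  have "Im (cinner a (A *v a)) = 0" "Im (cinner b (B *v b)) = 0"
    using hermitian_quadratic_real[OF assms(1), of a] hermitian_quadratic_real[OF assms(2), of b]
    by (metis Im_complex_of_real)+
  then show ?thesis
    by (simp add: kron_tensor_vec cinner_tensor_vec)
qed


lemma orthonormal_fam_tensor_Plus:
  assumes f1: "orthonormal_fam I1 f1" and f2: "orthonormal_fam I2 f2"
    and U: "orthonormal_fam (U1 \<union> U2) id" and disj: "U1 \<inter> U2 = {}"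
  shows "orthonormal_fam ((I1 \<times> U1) <+> (I2 \<times> U2))
    (case_sum (\<lambda>(i, u). tensor_vec (f1 i) u) (\<lambda>(i, u). tensor_vec (f2 i) u))"
  unfolding orthonormal_fam_def
proof (intro ballI)
  fix j j' assume "j \<in> (I1 \<times> U1) <+> (I2 \<times> U2)" "j' \<in> (I1 \<times> U1) <+> (I2 \<times> U2)"
  then show "cinner (case_sum (\<lambda>(i, u). tensor_vec (f1 i) u) (\<lambda>(i, u). tensor_vec (f2 i) u) j)
      (case_sum (\<lambda>(i, u). tensor_vec (f1 i) u) (\<lambda>(i, u). tensor_vec (f2 i) u) j') =
      (if j = j' then 1 else 0)"
    using f1 f2 U disj by (auto simp: orthonormal_fam_def cinner_tensor_vec)
qed

lemma proj_trace_tensor_Plus: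
  assumes "hermitian A" "hermitian B" "finite I1" "finite I2" "finite U1" "finite U2"
  shows "proj_trace (kron A B) ((I1 \<times> U1) <+> (I2 \<times> U2))
      (case_sum (\<lambda>(i, u). tensor_vec (f1 i) u) (\<lambda>(i, u). tensor_vec (f2 i) u)) =
    proj_trace A I1 f1 * proj_trace B U1 id + proj_trace A I2 f2 * proj_trace B U2 id"
  using assms
  by (simp add: proj_trace_def sum.Plus case_prod_beta quadratic_kron_tensor_vec sum_product
      sum.cartesian_product)


lemma proj_trace_nonneg: "psd A \<Longrightarrow> 0 \<le> proj_trace A I f"
  by (simp add: proj_trace_def sum_nonneg psd_quadratic_nonneg)

text \<open>The trace distance is attained by the projector onto the positive eigenvectors of
  \<open>\<sigma>1 - \<sigma>2\<close>.\<close>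

lemma trace_dist_positive_part:
  assumes d1: "density_op \<sigma>1" and d2: "density_op \<sigma>2"
  obtains U Up where "onb_of U UNIV" "Up \<subseteq> U"
    "proj_trace \<sigma>1 Up id - proj_trace \<sigma>2 Up id = trace_dist \<sigma>1 \<sigma>2"
proof -
  define Y where "Y = \<sigma>1 - \<sigma>2"
  have Y: "hermitian Y"
    using d1 d2 by (simp add: Y_def hermitian_diff density_op_hermitian)
  obtain U where U: "eigenbasis Y U"
    using hermitian_eigenbasis_exists[OF Y] by blast
  then have onb: "onb_of U UNIV" and fin: "finite U"
    by (simp_all add: eigenbasis_def onb_of_def)
  define l where "l u = Re (cinner u (Y *v u))" for u
  define Up where "Up = {u \<in> U. 0 < l u}"
  have "Up \<subseteq> U"
    by (auto simp: Up_def)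
  then have split: "(\<Sum>u\<in>U. g u) = (\<Sum>u\<in>Up. g u) + (\<Sum>u\<in>U - Up. g u)" for g :: "_ \<Rightarrow> real"
    using sum.subset_diff[OF _ fin] by (simp add: add.commute)
  have "(\<Sum>u\<in>U. l u) = 0"
    using d1 d2 by (simp add: l_def Re_trace_onb[OF onb, symmetric] Y_def trace_sub density_op_def)
  moreover have "(\<Sum>u\<in>U. \<bar>l u\<bar>) = 2 * trace_dist \<sigma>1 \<sigma>2"
    by (simp add: trace_dist_def trace_mat_abs_eigenbasis[OF Y U] Y_def[symmetric] l_def)
  moreover have "(\<Sum>u\<in>Up. \<bar>l u\<bar>) = (\<Sum>u\<in>Up. l u)"
    by (rule sum.cong) (auto simp: Up_def)
  moreover have "(\<Sum>u\<in>U - Up. \<bar>l u\<bar>) = (\<Sum>u\<in>U - Up. - l u)"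
    by (rule sum.cong) (auto simp: Up_def)
  then have "(\<Sum>u\<in>U - Up. \<bar>l u\<bar>) = - (\<Sum>u\<in>U - Up. l u)"
    by (simp add: sum_negf)
  ultimately have "(\<Sum>u\<in>Up. l u) = trace_dist \<sigma>1 \<sigma>2"
    using split[of l] split[of "\<lambda>u. \<bar>l u\<bar>"] by simp
  then have "proj_trace Y Up id = trace_dist \<sigma>1 \<sigma>2"
    by (simp add: proj_trace_def l_def)
  then have "proj_trace \<sigma>1 Up id - proj_trace \<sigma>2 Up id = trace_dist \<sigma>1 \<sigma>2"
    by (simp add: Y_def proj_trace_diff)
  then show thesis
    using that onb \<open>Up \<subseteq> U\<close> by blast
qed

text \<open>The bias of the product measurement \<open>P\<^sub>1 \<otimes> \<Pi>\<^sub>1 + P\<^sub>2 \<otimes> \<Pi>\<^sub>2\<close>, where \<open>\<Pi>\<^sub>1 + \<Pi>\<^sub>2 = 1\<close>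
  and \<open>P\<^sub>i\<close> projects onto the span of \<open>f\<^sub>i\<close>.\<close>

lemma product_measurement_le_trace_dist:
  fixes \<rho>1 \<rho>2 :: "'a::finite cmat" and \<sigma>1 \<sigma>2 :: "'b::finite cmat"
  assumes d: "density_op \<rho>1" "density_op \<rho>2" "density_op \<sigma>1" "density_op \<sigma>2"
    and U: "onb_of (U1 \<union> U2) UNIV" "U1 \<inter> U2 = {}"
    and I: "finite I1" "orthonormal_fam I1 f1" "finite I2" "orthonormal_fam I2 f2"
  shows "discrimination_bias \<rho>1 \<rho>2 (proj_trace \<sigma>1 U1 id) (proj_trace \<sigma>2 U1 id) I1 f1
      + discrimination_bias \<rho>1 \<rho>2 (proj_trace \<sigma>1 U2 id) (proj_trace \<sigma>2 U2 id) I2 f2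
    \<le> 2 * trace_dist (kron \<rho>1 \<sigma>1) (kron \<rho>2 \<sigma>2)"
proof -
  have H: "hermitian \<rho>1" "hermitian \<rho>2" "hermitian \<sigma>1" "hermitian \<sigma>2"
    using d by (simp_all add: density_op_hermitian)
  have fin: "finite U1" "finite U2" and orth: "orthonormal_fam (U1 \<union> U2) id"
    using U by (simp_all add: onb_of_def)
  have sum1: "proj_trace \<sigma> U1 id + proj_trace \<sigma> U2 id = 1" if "density_op \<sigma>" for \<sigma>
    using that proj_trace_onb[OF U(1), of \<sigma>] fin U(2)
    by (simp add: proj_trace_def sum.union_disjoint density_op_def)
  define J where "J = (I1 \<times> U1) <+> (I2 \<times> U2)"
  define F where "F = case_sum (\<lambda>(i, u :: complex ^ 'b). tensor_vec (f1 i) u)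
    (\<lambda>(i, u :: complex ^ 'b). tensor_vec (f2 i) u)"
  define X where "X = kron \<rho>1 \<sigma>1 - kron \<rho>2 \<sigma>2"
  have "Re (trace X) = 0"
    using d by (simp add: X_def trace_sub trace_kron density_op_def)
  then have "discrimination_bias \<rho>1 \<rho>2 (proj_trace \<sigma>1 U1 id) (proj_trace \<sigma>2 U1 id) I1 f1
      + discrimination_bias \<rho>1 \<rho>2 (proj_trace \<sigma>1 U2 id) (proj_trace \<sigma>2 U2 id) I2 f2
      = 2 * proj_trace X J F - Re (trace X)"
    using sum1[OF d(3)] sum1[OF d(4)]
    by (simp add: X_def J_def F_def proj_trace_diff proj_trace_tensor_Plus H I(1,3) fin
        discrimination_bias_def algebra_simps)
  also have "\<dots> \<le> Re (trace (mat_abs X))"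
  proof (rule trace_mat_abs_ge)
    show "hermitian X"
      by (simp add: X_def H hermitian_diff hermitian_kron)
    show "finite J"
      using I fin by (simp add: J_def)
    show "orthonormal_fam J F"
      unfolding J_def F_def by (rule orthonormal_fam_tensor_Plus[OF I(2,4) orth U(2)])
  qed
  finally show ?thesis
    by (simp add: trace_dist_def X_def)
qed

text \<open>Measure \<open>\<sigma>\<close> with the projector onto its positive part, and \<open>\<rho>\<close> with the optimal Helstrom
  measurement for the weights that \<open>\<sigma>1, \<sigma>2\<close> give to each outcome.\<close>

theorem trace_dist_kron_ge:
  fixes \<rho>1 \<rho>2 :: "'a::finite cmat" and \<sigma>1 \<sigma>2 :: "'b::finite cmat"
  assumes d: "density_op \<rho>1" "density_op \<rho>2" "density_op \<sigma>1" "density_op \<sigma>2"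
    and c: "0 \<le> c" "c \<le> 1"
    and overlap: "\<And>u v. u \<in> supp_op \<rho>1 \<Longrightarrow> v \<in> supp_op \<rho>2 \<Longrightarrow> norm u = 1 \<Longrightarrow> norm v = 1 \<Longrightarrow>
      cmod (cinner u v) \<le> c"
  shows "1 - c\<^sup>2 + c\<^sup>2 * (trace_dist \<sigma>1 \<sigma>2)\<^sup>2 \<le> (trace_dist (kron \<rho>1 \<sigma>1) (kron \<rho>2 \<sigma>2))\<^sup>2"
proof -
  obtain U Up where U: "onb_of U UNIV" and Up: "Up \<subseteq> U"
    and t: "proj_trace \<sigma>1 Up id - proj_trace \<sigma>2 Up id = trace_dist \<sigma>1 \<sigma>2"
    using trace_dist_positive_part[OF d(3,4)] by blast
  define Um where "Um = U - Up"
  have U': "onb_of (Up \<union> Um) UNIV" "Up \<inter> Um = {}"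
    using U Up by (auto simp: Um_def Un_absorb1)
  define p1 q1 p2 q2 where "p1 = proj_trace \<sigma>1 Up id" and "q1 = proj_trace \<sigma>2 Up id"
    and "p2 = proj_trace \<sigma>1 Um id" and "q2 = proj_trace \<sigma>2 Um id"
  have nonneg: "0 \<le> p1" "0 \<le> q1" "0 \<le> p2" "0 \<le> q2"
    using d by (simp_all add: p1_def q1_def p2_def q2_def proj_trace_nonneg density_op_psd)
  obtain I1 and f1 :: "complex ^ 'a \<Rightarrow> complex ^ 'a" where I1: "finite I1" "orthonormal_fam I1 f1"
    and bias1: "helstrom_bound c p1 q1 \<le> discrimination_bias \<rho>1 \<rho>2 p1 q1 I1 f1"
    using helstrom_bound_overlapping_supports[OF d(1,2) c overlap nonneg(1,2)] by blast
  obtain I2 and f2 :: "complex ^ 'a \<Rightarrow> complex ^ 'a" where I2: "finite I2" "orthonormal_fam I2 f2"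
    and bias2: "helstrom_bound c p2 q2 \<le> discrimination_bias \<rho>1 \<rho>2 p2 q2 I2 f2"
    using helstrom_bound_overlapping_supports[OF d(1,2) c overlap nonneg(3,4)] by blast
  have "p1 + p2 = 1" "q1 + q2 = 1"
    using proj_trace_onb[OF U'(1)] U' d(3,4)
    by (simp_all add: p1_def q1_def p2_def q2_def proj_trace_def sum.union_disjoint onb_of_def
        density_op_def)
  then have "2 * sqrt (1 - c\<^sup>2 + c\<^sup>2 * (p1 - q1)\<^sup>2) \<le> helstrom_bound c p1 q1 + helstrom_bound c p2 q2"
    by (rule helstrom_bound_split[OF c])
  also have "\<dots> \<le> 2 * trace_dist (kron \<rho>1 \<sigma>1) (kron \<rho>2 \<sigma>2)"
    using bias1 bias2 product_measurement_le_trace_dist[OF d U' I1 I2]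
    by (simp add: p1_def q1_def p2_def q2_def)
  finally have "sqrt (1 - c\<^sup>2 + c\<^sup>2 * (trace_dist \<sigma>1 \<sigma>2)\<^sup>2) \<le> trace_dist (kron \<rho>1 \<sigma>1) (kron \<rho>2 \<sigma>2)"
    using t by (simp add: p1_def q1_def)
  moreover have "0 \<le> 1 - c\<^sup>2 + c\<^sup>2 * (trace_dist \<sigma>1 \<sigma>2)\<^sup>2"
    using c by (simp add: power_le_one add_nonneg_nonneg)
  ultimately show ?thesis
    by (metis power_mono real_sqrt_ge_zero real_sqrt_pow2)
qed

theorem mainTheorem7:
  fixes \<rho>1 \<rho>2 :: "complex ^ ('a::finite) ^ 'a"
    and \<sigma>1 \<sigma>2 :: "complex ^ ('b::finite) ^ 'b"
  assumes "density_op \<rho>1" "density_op \<rho>2" "density_op \<sigma>1" "density_op \<sigma>2"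
  shows "(trace_dist (kron \<rho>1 \<sigma>1) (kron \<rho>2 \<sigma>2))\<^sup>2
           \<ge> 1 - (1 - (wc_dist \<rho>1 \<rho>2)\<^sup>2) * (1 - (trace_dist \<sigma>1 \<sigma>2)\<^sup>2)
         \<and> trace_dist \<rho>1 \<rho>2 \<ge> wc_dist \<rho>1 \<rho>2"
proof -
  define w where "w = wc_dist \<rho>1 \<rho>2"
  define c where "c = sqrt (1 - w\<^sup>2)"
  have w: "0 \<le> w" "w \<le> 1"
    using wc_dist_nonneg wc_dist_le_1 assms by (simp_all add: w_def)
  then have c: "0 \<le> c" "c \<le> 1" and c2: "c\<^sup>2 = 1 - w\<^sup>2"
    by (simp_all add: c_def power_le_one)
  have overlap: "cmod (cinner u v) \<le> c"
    if "u \<in> supp_op \<rho>1" "v \<in> supp_op \<rho>2" "norm u = 1" "norm v = 1" for u v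
    using cmod_cinner_supp_le_wc_dist[OF assms(1,2) that] by (simp add: c_def w_def)
  have "1 - (1 - w\<^sup>2) * (1 - (trace_dist \<sigma>1 \<sigma>2)\<^sup>2) = 1 - c\<^sup>2 + c\<^sup>2 * (trace_dist \<sigma>1 \<sigma>2)\<^sup>2"
    by (simp only: c2) (simp add: algebra_simps)
  then have "1 - (1 - w\<^sup>2) * (1 - (trace_dist \<sigma>1 \<sigma>2)\<^sup>2) \<le> (trace_dist (kron \<rho>1 \<sigma>1) (kron \<rho>2 \<sigma>2))\<^sup>2"
    using trace_dist_kron_ge[OF assms c overlap] by (rule ord_eq_le_trans)
  moreover have "sqrt (1 - c\<^sup>2) \<le> trace_dist \<rho>1 \<rho>2"
    by (rule trace_dist_ge_overlap[OF assms(1,2) c overlap])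
  moreover have "sqrt (1 - c\<^sup>2) = w"
    using w by (simp only: c2) simp
  ultimately show ?thesis
    by (simp add: w_def)
qed

end
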